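(* Suppose the budget and utility parameters of users are drawn i.i.d. from a discrete distribution $\mathcal{D}$ with finite support $\{(\tilde w_k,\tilde{\mathbf{u}}_k)\}_{k=1}^K$ and probabilities $q_k$, satisfying that for each good $j$, $\mathbb{P}_{\mathcal{D}}(u_j>0)>0$. Let $\boldsymbol{\pi}$ be the adaptive expected equilibrium pricing policy described below, and let $0<\underline{p}\le\bar p$ be lower and upper bounds on the prices, i.e., $\underline{p}\le p_j^t\le\bar p$ for all goods $j$ and users $t\in[n]$. Let $\mathbf{x}_1,\dots,\mathbf{x}_n$ be the allocations where, for a user $t$ of type $k$, $\mathbf{x}_t=\mathbf{z}_k^*$ for an optimal solution $(\mathbf{z}_1^*,\dots,\mathbf{z}_K^* )$ of $CE(\mathbf{d}_t)$ if $t\le\tau$, and of $CE(\mathbf{d})$ if $t>\tau$, where $\tau$ is the first time at which $\mathbf{d}_t\notin[\mathbf{d}-\Delta,\mathbf{d}+\Delta]$. Then the expected constraint violation satisfies $V_n(\boldsymbol{\pi})\le O(1)$ and the expected regret satisfies $R_n(\boldsymbol{\pi})\le O(\log n)$.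
   Context: Online Fisher market: $m$ divisible goods, good $j$ with capacity $c_j=nd_j$, $\mathbf{d}>\mathbf{0}$; $n$ users arrive sequentially with budget $w_t>0$ and utility vector $\mathbf{u}_t\ge\mathbf{0}$, $(w_t,\mathbf{u}_t)$ i.i.d. from $\mathcal{D}$, where $\mathbb{P}((w_t,\mathbf{u}_t)=(\tilde w_k,\tilde{\mathbf{u}}_k))=q_k$, $\sum_k q_k=1$, budgets in $[\underline w,\bar w]$ with $\underline w>0$. For a vector $\mathbf{d}'>\mathbf{0}$, the certainty-equivalent problem $CE(\mathbf{d}')$ is $\max_{\mathbf{z}_k\in\mathbb{R}^m}\sum_{k=1}^K q_k\tilde w_k\log(\sum_j\tilde u_{kj}z_{kj})$ s.t. $\sum_{k}q_kz_{kj}\le d'_j$ for all $j$, $z_{kj}\ge0$. Adaptive expected equilibrium pricing (with threshold vector $\mathbf{0}<\Delta<\mathbf{d}$): set $\mathbf{d}_1=\mathbf{c}/n=\mathbf{d}$; for $t=1,\dots,n$: if $\mathbf{d}_{t'}\in[\mathbf{d}-\Delta,\mathbf{d}+\Delta]$ for all $t'\le t$, set $\mathbf{p}^t$ to the optimal dual variables of the capacity constraints of $CE(\mathbf{d}_t)$, otherwise to those of $CE(\mathbf{d})$; user $t$ receives $\mathbf{x}_t$ (an optimal bundle for the user's problem $\max\mathbf{u}_t^\top\mathbf{x}$ s.t. $(\mathbf{p}^t)^\top\mathbf{x}\le w_t,\mathbf{x}\ge0$); remaining capacities $\mathbf{c}_{t+1}=\mathbf{c}_t-\mathbf{x}_t$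 (with $\mathbf{c}_1=\mathbf{c}$) and $\mathbf{d}_{t+1}=\mathbf{c}_{t+1}/(n-t)$. Offline optimum $U_n^*=\max\{\sum_t w_t\log(\sum_j u_{tj}x_{tj}):\sum_t x_{tj}\le c_j,\ x\ge0\}$; $U_n(\boldsymbol{\pi})=\sum_t w_t\log(\mathbf{u}_t^\top\mathbf{x}_t)$; $R_n=\mathbb{E}[U_n^*-U_n(\boldsymbol{\pi})]$; $V_n=\mathbb{E}[\|(\sum_t\mathbf{x}_t-\mathbf{c})_+\|_2]$. Asymptotic notation is as $n\to\infty$ with $m,K,\mathcal{D},\mathbf{d},\Delta,\underline p,\bar p$ fixed. *)

theory Defs
  imports "HOL-Analysis.Analysis"
begin

text \<open>Conventions: goods are indexed by j < m, types (support points of the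
distribution) by k < K, users by t < n (0-based: user t is the paper's user t+1).
Vectors are functions nat \<Rightarrow> real; a CE solution z is indexed as z k j.\<close>

definition in_box :: "nat \<Rightarrow> (nat \<Rightarrow> real) \<Rightarrow> (nat \<Rightarrow> real) \<Rightarrow> (nat \<Rightarrow> real) \<Rightarrow> bool" where
  "in_box m d Delta v \<longleftrightarrow> (\<forall>j<m. d j - Delta j \<le> v j \<and> v j \<le> d j + Delta j)"

text \<open>Certainty-equivalent problem CE(d').  Points with u_k . z_k = 0 have objective
-infinity and are excluded from the domain (they can never be optimal).\<close>

definition CE_obj :: "nat \<Rightarrow> nat \<Rightarrow> (nat \<Rightarrow> real) \<Rightarrow> (nat \<Rightarrow> real) \<Rightarrow> (nat \<Rightarrow> nat \<Rightarrow> real)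
    \<Rightarrow> (nat \<Rightarrow> nat \<Rightarrow> real) \<Rightarrow> real" where
  "CE_obj m K q w u z = (\<Sum>k<K. q k * w k * ln (\<Sum>j<m. u k j * z k j))"

definition CE_dom :: "nat \<Rightarrow> nat \<Rightarrow> (nat \<Rightarrow> nat \<Rightarrow> real) \<Rightarrow> (nat \<Rightarrow> nat \<Rightarrow> real) set" where
  "CE_dom m K u = {z. (\<forall>k<K. \<forall>j<m. 0 \<le> z k j) \<and> (\<forall>k<K. 0 < (\<Sum>j<m. u k j * z k j))}"

definition CE_feasible :: "nat \<Rightarrow> nat \<Rightarrow> (nat \<Rightarrow> real) \<Rightarrow> (nat \<Rightarrow> nat \<Rightarrow> real)
    \<Rightarrow> (nat \<Rightarrow> real) \<Rightarrow> (nat \<Rightarrow> nat \<Rightarrow> real) \<Rightarrow> bool" where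
  "CE_feasible m K q u d' z \<longleftrightarrow> z \<in> CE_dom m K u \<and> (\<forall>j<m. (\<Sum>k<K. q k * z k j) \<le> d' j)"

definition CE_optimal :: "nat \<Rightarrow> nat \<Rightarrow> (nat \<Rightarrow> real) \<Rightarrow> (nat \<Rightarrow> real) \<Rightarrow> (nat \<Rightarrow> nat \<Rightarrow> real)
    \<Rightarrow> (nat \<Rightarrow> real) \<Rightarrow> (nat \<Rightarrow> nat \<Rightarrow> real) \<Rightarrow> bool" where
  "CE_optimal m K q w u d' z \<longleftrightarrow> CE_feasible m K q u d' z \<and>
     (\<forall>z'. CE_feasible m K q u d' z' \<longrightarrow> CE_obj m K q w u z' \<le> CE_obj m K q w u z)"

definition CE_dual_fun :: "nat \<Rightarrow> nat \<Rightarrow> (nat \<Rightarrow> real) \<Rightarrow> (nat \<Rightarrow> real) \<Rightarrow> (nat \<Rightarrow> nat \<Rightarrow> real)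
    \<Rightarrow> (nat \<Rightarrow> real) \<Rightarrow> (nat \<Rightarrow> real) \<Rightarrow> ereal" where
  "CE_dual_fun m K q w u d' p = (SUP z \<in> CE_dom m K u.
      ereal (CE_obj m K q w u z - (\<Sum>j<m. p j * ((\<Sum>k<K. q k * z k j) - d' j))))"

definition CE_dual_optimal :: "nat \<Rightarrow> nat \<Rightarrow> (nat \<Rightarrow> real) \<Rightarrow> (nat \<Rightarrow> real) \<Rightarrow> (nat \<Rightarrow> nat \<Rightarrow> real)
    \<Rightarrow> (nat \<Rightarrow> real) \<Rightarrow> (nat \<Rightarrow> real) \<Rightarrow> bool" where
  "CE_dual_optimal m K q w u d' p \<longleftrightarrow> (\<forall>j<m. 0 \<le> p j) \<and>
     CE_dual_fun m K q w u d' p = (INF p' \<in> {p'. \<forall>j<m. 0 \<le> p' j}. CE_dual_fun m K q w u d' p')"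

text \<open>The adaptive policy.  sol d' is the chosen optimal solution of CE(d');
ks t is the type of user t.  The state before user t is (remaining capacity c_t,
flag = "all of d_0,...,d_{t-1} were in the box").\<close>

definition pol_d :: "nat \<Rightarrow> nat \<Rightarrow> (nat \<Rightarrow> real) \<Rightarrow> nat \<Rightarrow> (nat \<Rightarrow> real)" where
  "pol_d m n c t = (\<lambda>j. c j / real (n - t))"

fun pol_state :: "nat \<Rightarrow> (nat \<Rightarrow> real) \<Rightarrow> (nat \<Rightarrow> real) \<Rightarrow> ((nat \<Rightarrow> real) \<Rightarrow> nat \<Rightarrow> nat \<Rightarrow> real)
    \<Rightarrow> nat \<Rightarrow> (nat \<Rightarrow> nat) \<Rightarrow> nat \<Rightarrow> (nat \<Rightarrow> real) \<times> bool" where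
  "pol_state m d Delta sol n ks 0 = ((\<lambda>j. real n * d j), True)"
| "pol_state m d Delta sol n ks (Suc t) =
     (let (c, ok) = pol_state m d Delta sol n ks t;
          ok' = (ok \<and> in_box m d Delta (pol_d m n c t));
          d' = (if ok' then pol_d m n c t else d)
      in ((\<lambda>j. c j - sol d' (ks t) j), ok'))"

definition pol_used_d :: "nat \<Rightarrow> (nat \<Rightarrow> real) \<Rightarrow> (nat \<Rightarrow> real) \<Rightarrow> ((nat \<Rightarrow> real) \<Rightarrow> nat \<Rightarrow> nat \<Rightarrow> real)
    \<Rightarrow> nat \<Rightarrow> (nat \<Rightarrow> nat) \<Rightarrow> nat \<Rightarrow> (nat \<Rightarrow> real)" where
  "pol_used_d m d Delta sol n ks t =
     (let (c, ok) = pol_state m d Delta sol n ks t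
      in if ok \<and> in_box m d Delta (pol_d m n c t) then pol_d m n c t else d)"

definition pol_alloc :: "nat \<Rightarrow> (nat \<Rightarrow> real) \<Rightarrow> (nat \<Rightarrow> real) \<Rightarrow> ((nat \<Rightarrow> real) \<Rightarrow> nat \<Rightarrow> nat \<Rightarrow> real)
    \<Rightarrow> nat \<Rightarrow> (nat \<Rightarrow> nat) \<Rightarrow> nat \<Rightarrow> (nat \<Rightarrow> real)" where
  "pol_alloc m d Delta sol n ks t = sol (pol_used_d m d Delta sol n ks t) (ks t)"

definition offline_opt :: "nat \<Rightarrow> (nat \<Rightarrow> real) \<Rightarrow> (nat \<Rightarrow> nat \<Rightarrow> real) \<Rightarrow> (nat \<Rightarrow> real)
    \<Rightarrow> nat \<Rightarrow> (nat \<Rightarrow> nat) \<Rightarrow> real" where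
  "offline_opt m w u d n ks = Sup {(\<Sum>t<n. w (ks t) * ln (\<Sum>j<m. u (ks t) j * x t j)) | x.
      (\<forall>t<n. \<forall>j<m. 0 \<le> x t j) \<and> (\<forall>j<m. (\<Sum>t<n. x t j) \<le> real n * d j) \<and>
      (\<forall>t<n. 0 < (\<Sum>j<m. u (ks t) j * x t j))}"

definition online_util :: "nat \<Rightarrow> (nat \<Rightarrow> real) \<Rightarrow> (nat \<Rightarrow> nat \<Rightarrow> real) \<Rightarrow> (nat \<Rightarrow> real) \<Rightarrow> (nat \<Rightarrow> real)
    \<Rightarrow> ((nat \<Rightarrow> real) \<Rightarrow> nat \<Rightarrow> nat \<Rightarrow> real) \<Rightarrow> nat \<Rightarrow> (nat \<Rightarrow> nat) \<Rightarrow> real" where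
  "online_util m w u d Delta sol n ks =
     (\<Sum>t<n. w (ks t) * ln (\<Sum>j<m. u (ks t) j * pol_alloc m d Delta sol n ks t j))"

definition violation :: "nat \<Rightarrow> (nat \<Rightarrow> real) \<Rightarrow> (nat \<Rightarrow> real)
    \<Rightarrow> ((nat \<Rightarrow> real) \<Rightarrow> nat \<Rightarrow> nat \<Rightarrow> real) \<Rightarrow> nat \<Rightarrow> (nat \<Rightarrow> nat) \<Rightarrow> real" where
  "violation m d Delta sol n ks =
     sqrt (\<Sum>j<m. (max 0 ((\<Sum>t<n. pol_alloc m d Delta sol n ks t j) - real n * d j))\<^sup>2)"

text \<open>Expectation over i.i.d. types: finite sum over all type sequences of length n.\<close>

definition expect_seq :: "nat \<Rightarrow> (nat \<Rightarrow> real) \<Rightarrow> nat \<Rightarrow> ((nat \<Rightarrow> nat) \<Rightarrow> real) \<Rightarrow> real" where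
  "expect_seq K q n f = (\<Sum>ks \<in> PiE {..<n} (\<lambda>_. {..<K}). (\<Prod>t<n. q (ks t)) * f ks)"

definition regret where
  "regret m K q w u d Delta sol n =
     expect_seq K q n (\<lambda>ks. offline_opt m w u d n ks - online_util m w u d Delta sol n ks)"

definition exp_violation where
  "exp_violation m K q d Delta sol n = expect_seq K q n (violation m d Delta sol n)"

end

(*
  Write d_t for the remaining capacity per remaining user. Since the capacity constraints of CE(d_t)
  are tight, the expected consumption of user t is exactly d_t, so d_t stopped at its exit from the
  box is a martingale with increments of order 1/(n - t); its second and fourth moments are
  O(1/(n - t)) and O(1/(n - t)^2). By Markov's inequality for the fourth moment the policy leaves
  the box by time t with probability O(1/(n - t)^2), which is summable, and after the exit every
  user overdraws by a bounded amount: hence V_n = O(1).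
  For the regret, weak duality with the equilibrium prices of CE(d) bounds the offline optimum by a
  quantity with expectation n times the value of CE(d), while the value of CE(d') is at least its
  linearisation at d minus a quadratic term. The linear term has mean zero and the quadratic term
  costs O(1/(n - t)) for user t, which sums to O(log n).
*)
theory Submission
  imports Defs
begin

section \<open>Expectation over i.i.d. type sequences\<close>

abbreviation type_seqs :: "nat \<Rightarrow> nat \<Rightarrow> (nat \<Rightarrow> nat) set" where
  "type_seqs K n \<equiv> PiE {..<n} (\<lambda>_. {..<K})"

lemma sum_PiE_split_coord:
  fixes G :: "(nat \<Rightarrow> 'b) \<Rightarrow> 'a::comm_monoid_add"
  assumes "t < n"
  shows "(\<Sum>ks\<in>PiE {..<n} (\<lambda>_. A). G ks) =
    (\<Sum>h\<in>PiE ({..<n} - {t}) (\<lambda>_. A). \<Sum>y\<in>A. G (h(t := y)))"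
proof -
  let ?S = "{..<n} - {t}"
  have "(\<Sum>ks\<in>PiE (insert t ?S) (\<lambda>_. A). G ks) =
      (\<Sum>(y, h)\<in>A \<times> PiE ?S (\<lambda>_. A). G (h(t := y)))"
    by (intro sum.reindex_bij_witness[of _ "\<lambda>(y, h). h(t := y)" "\<lambda>g. (g t, g(t := undefined))"])
       (auto simp: PiE_def extensional_def)
  also have "\<dots> = (\<Sum>h\<in>PiE ?S (\<lambda>_. A). \<Sum>y\<in>A. G (h(t := y)))"
    by (simp add: sum.cartesian_product[symmetric] sum.swap[of _ A])
  finally show ?thesis
    using assms by (simp add: insert_absorb)
qed

lemma expect_seq_resample_coord:
  assumes "t < n" and "(\<Sum>k<K. q k) = 1"
  shows "expect_seq K q n F = expect_seq K q n (\<lambda>ks. \<Sum>k<K. q k * F (ks(t := k)))"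
proof -
  let ?S = "{..<n} - {t}"
  let ?P = "\<lambda>h. \<Prod>s\<in>?S. q (h s)"
  have prod_upd: "(\<Prod>s<n. q ((h(t := y)) s)) = q y * ?P h" for h y
  proof -
    have "(\<Prod>s<n. q ((h(t := y)) s)) = q y * (\<Prod>s\<in>?S. q ((h(t := y)) s))"
      using assms(1) by (subst prod.remove[of _ t]) auto
    also have "(\<Prod>s\<in>?S. q ((h(t := y)) s)) = ?P h"
      by (intro prod.cong) auto
    finally show ?thesis .
  qed
  have "expect_seq K q n F = (\<Sum>h\<in>PiE ?S (\<lambda>_. {..<K}). \<Sum>y<K. q y * ?P h * F (h(t := y)))"
    unfolding expect_seq_def by (subst sum_PiE_split_coord[OF assms(1)]) (simp only: prod_upd)
  also have "\<dots> = (\<Sum>h\<in>PiE ?S (\<lambda>_. {..<K}). ?P h * (\<Sum>k<K. q k * F (h(t := k))))"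
    by (simp add: sum_distrib_left mult_ac)
  also have "\<dots> = (\<Sum>h\<in>PiE ?S (\<lambda>_. {..<K}). \<Sum>y<K. q y * ?P h * (\<Sum>k<K. q k * F (h(t := k))))"
    using assms(2) by (simp add: sum_distrib_right[symmetric] mult.assoc)
  also have "\<dots> = expect_seq K q n (\<lambda>ks. \<Sum>k<K. q k * F (ks(t := k)))"
    unfolding expect_seq_def by (subst sum_PiE_split_coord[OF assms(1)]) (simp only: prod_upd fun_upd_upd)
  finally show ?thesis .
qed

lemma expect_seq_const:
  assumes "(\<Sum>k<K. q k) = 1"
  shows "expect_seq K q n (\<lambda>_. c) = c"
proof -
  have "(\<Sum>ks\<in>type_seqs K n. \<Prod>t<n. q (ks t)) = (\<Prod>t<n. \<Sum>k<K. q k)"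
    by (subst prod_sum_PiE) auto
  then show ?thesis
    using assms unfolding expect_seq_def by (simp add: sum_distrib_right[symmetric])
qed

lemma expect_seq_cong:
  "(\<And>ks. ks \<in> type_seqs K n \<Longrightarrow> f ks = g ks) \<Longrightarrow> expect_seq K q n f = expect_seq K q n g"
  unfolding expect_seq_def by (intro sum.cong) auto

lemma expect_seq_mono:
  "(\<forall>k<K. 0 \<le> q k) \<Longrightarrow> (\<And>ks. ks \<in> type_seqs K n \<Longrightarrow> f ks \<le> g ks) \<Longrightarrow>
    expect_seq K q n f \<le> expect_seq K q n g"
  unfolding expect_seq_def by (intro sum_mono mult_left_mono prod_nonneg) (auto simp: PiE_iff)

lemma expect_seq_add:
  "expect_seq K q n (\<lambda>ks. f ks + g ks) = expect_seq K q n f + expect_seq K q n g"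
  unfolding expect_seq_def by (simp add: distrib_left sum.distrib)

lemma expect_seq_diff:
  "expect_seq K q n (\<lambda>ks. f ks - g ks) = expect_seq K q n f - expect_seq K q n g"
  unfolding expect_seq_def by (simp add: right_diff_distrib sum_subtractf)

lemma expect_seq_mult_left:
  "expect_seq K q n (\<lambda>ks. c * f ks) = c * expect_seq K q n f"
  unfolding expect_seq_def by (simp add: sum_distrib_left mult_ac)

lemma expect_seq_sum:
  "expect_seq K q n (\<lambda>ks. \<Sum>i\<in>I. f i ks) = (\<Sum>i\<in>I. expect_seq K q n (f i))"
  unfolding expect_seq_def by (simp add: sum_distrib_left sum.swap[of _ I])

lemma expect_seq_coord:
  assumes "t < n" and "(\<Sum>k<K. q k) = 1"
  shows "expect_seq K q n (\<lambda>ks. f (ks t)) = (\<Sum>k<K. q k * f k)"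
  by (subst expect_seq_resample_coord[OF assms]) (simp add: expect_seq_const[OF assms(2)])

lemma expect_seq_mult_mean_zero:
  assumes "t < n" and q_sum: "(\<Sum>k<K. q k) = 1"
    and g: "\<And>ks k. ks \<in> type_seqs K n \<Longrightarrow> k < K \<Longrightarrow> g (ks(t := k)) = g ks"
    and h: "\<And>ks. ks \<in> type_seqs K n \<Longrightarrow> (\<Sum>k<K. q k * h (ks(t := k))) = 0"
  shows "expect_seq K q n (\<lambda>ks. g ks * h ks) = 0"
proof -
  have "expect_seq K q n (\<lambda>ks. g ks * h ks) =
      expect_seq K q n (\<lambda>ks. \<Sum>k<K. q k * (g (ks(t := k)) * h (ks(t := k))))"
    by (rule expect_seq_resample_coord[OF assms(1,2)])
  also have "\<dots> = expect_seq K q n (\<lambda>_. 0)"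
    by (rule expect_seq_cong) (simp add: g h sum_distrib_left[symmetric] mult.left_commute)
  finally show ?thesis
    by (simp add: expect_seq_const[OF q_sum])
qed

section \<open>Moments of martingales with increments of order 1/(n - t)\<close>

lemma power2_add_le:
  fixes x y c :: real
  assumes "\<bar>x\<bar> \<le> c"
  shows "(y + x)^2 \<le> y^2 + 2 * (y * x) + c^2"
proof -
  have "x^2 \<le> c^2"
    using assms by (metis abs_ge_zero power2_abs power_mono)
  then show ?thesis
    by (simp add: power2_eq_square algebra_simps)
qed

lemma power4_add_le:
  fixes x y c A :: real
  assumes x: "\<bar>x\<bar> \<le> c" and y: "\<bar>y\<bar> \<le> A"
  shows "(y + x)^4 \<le> y^4 + 4 * (y^3 * x) + 6 * c^2 * y^2 + 4 * A * c^3 + c^4"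
proof -
  have expand: "(y + x)^4 = y^4 + 4 * (y^3 * x) + 6 * (x^2 * y^2) + 4 * (y * x^3) + x^4"
    by (simp add: power4_eq_xxxx power3_eq_cube power2_eq_square algebra_simps)
  have x_pow: "\<bar>x\<bar>^i \<le> c^i" for i
    using x by (intro power_mono) auto
  have "x^2 * y^2 \<le> c^2 * y^2"
    using x_pow[of 2] by (intro mult_right_mono) auto
  moreover have "y * x^3 \<le> A * c^3"
  proof -
    have "y * x^3 \<le> \<bar>y\<bar> * \<bar>x\<bar>^3"
      by (metis abs_ge_self abs_mult power_abs)
    also have "\<dots> \<le> A * c^3"
      using x_pow[of 3] y by (intro mult_mono) auto
    finally show ?thesis .
  qed
  moreover have "x^4 \<le> c^4"
    using x_pow[of 4] by simp
  ultimately show ?thesis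
    unfolding expand by linarith
qed

lemma expect_seq_moments_add_increment:
  fixes y xi :: "(nat \<Rightarrow> nat) \<Rightarrow> real"
  assumes q_nonneg: "\<forall>k<K. 0 \<le> q k" and q_sum: "(\<Sum>k<K. q k) = 1"
    and xi_bound: "\<And>ks. ks \<in> type_seqs K n \<Longrightarrow> \<bar>xi ks\<bar> \<le> c"
    and y_bound: "\<And>ks. ks \<in> type_seqs K n \<Longrightarrow> \<bar>y ks\<bar> \<le> A"
    and orth: "\<And>i. expect_seq K q n (\<lambda>ks. y ks ^ i * xi ks) = 0"
  shows "expect_seq K q n (\<lambda>ks. y ks + xi ks) = expect_seq K q n y"
    and "expect_seq K q n (\<lambda>ks. (y ks + xi ks)^2) \<le> expect_seq K q n (\<lambda>ks. (y ks)^2) + c^2"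
    and "expect_seq K q n (\<lambda>ks. (y ks + xi ks)^4) \<le>
      expect_seq K q n (\<lambda>ks. (y ks)^4) + 6 * c^2 * expect_seq K q n (\<lambda>ks. (y ks)^2) + 4 * A * c^3 + c^4"
proof -
  note E_simps = expect_seq_add expect_seq_mult_left expect_seq_const[OF q_sum]
  show "expect_seq K q n (\<lambda>ks. y ks + xi ks) = expect_seq K q n y"
    using orth[of 0] by (simp add: expect_seq_add)
  have "expect_seq K q n (\<lambda>ks. (y ks + xi ks)^2) \<le>
      expect_seq K q n (\<lambda>ks. (y ks)^2 + 2 * (y ks * xi ks) + c^2)"
    by (intro expect_seq_mono[OF q_nonneg] power2_add_le xi_bound)
  also have "\<dots> = expect_seq K q n (\<lambda>ks. (y ks)^2) + c^2"
    using orth[of 1] by (simp add: E_simps)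
  finally show "expect_seq K q n (\<lambda>ks. (y ks + xi ks)^2) \<le> expect_seq K q n (\<lambda>ks. (y ks)^2) + c^2" .
  have "expect_seq K q n (\<lambda>ks. (y ks + xi ks)^4) \<le>
      expect_seq K q n (\<lambda>ks. (y ks)^4 + 4 * ((y ks)^3 * xi ks) + 6 * c^2 * (y ks)^2 + 4 * A * c^3 + c^4)"
    by (intro expect_seq_mono[OF q_nonneg] power4_add_le xi_bound y_bound)
  also have "\<dots> = expect_seq K q n (\<lambda>ks. (y ks)^4) + 6 * c^2 * expect_seq K q n (\<lambda>ks. (y ks)^2) + 4 * A * c^3 + c^4"
    using orth[of 3] by (simp add: E_simps)
  finally show "expect_seq K q n (\<lambda>ks. (y ks + xi ks)^4) \<le>
      expect_seq K q n (\<lambda>ks. (y ks)^4) + 6 * c^2 * expect_seq K q n (\<lambda>ks. (y ks)^2) + 4 * A * c^3 + c^4" .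
qed

lemma inverse_recursion_le:
  fixes r C :: real
  assumes r: "1 \<le> r" and C: "0 \<le> C"
  shows "2 * C / (r + 1) + C / r^2 \<le> 2 * C / r"
proof -
  have "C * (r + 1) \<le> C * (r * 2)"
    using r C by (intro mult_left_mono) auto
  then have "C / r^2 \<le> 2 * C / (r * (r + 1))"
    using r by (simp add: divide_simps power2_eq_square mult_ac)
  moreover have "2 * C / r - 2 * C / (r + 1) = 2 * C / (r * (r + 1))"
    using r by (simp add: field_simps)
  ultimately show ?thesis
    by linarith
qed

lemma inverse_square_recursion_le:
  fixes r G :: real
  assumes r: "1 \<le> r" and G: "0 \<le> G"
  shows "2 * G / (r + 1)^2 + G / r^3 \<le> 2 * G / r^2"
proof -
  have r0: "0 < r"
    using r by simp
  have "1 \<le> r * r"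
    using r by (metis mult_mono' mult_1 zero_le_one)
  then have "(r + 1)^2 \<le> 2 * r * (2 * r + 1)"
    by (simp add: power2_eq_square algebra_simps)
  then have "r^2 * (r + 1)^2 \<le> r^3 * (2 * (2 * r + 1))"
    using r0 mult_left_mono[of "(r + 1)^2" "2 * r * (2 * r + 1)" "r^2"]
    by (simp add: power2_eq_square power3_eq_cube mult_ac)
  then have "G / r^3 \<le> 2 * G * (2 * r + 1) / (r^2 * (r + 1)^2)"
    using r0 G mult_left_mono[of "r^2 * (r + 1)^2" "r^3 * (2 * (2 * r + 1))" G]
    by (simp add: divide_simps mult_ac)
  moreover have "2 * G / r^2 - 2 * G / (r + 1)^2 = 2 * G * ((r + 1)^2 - r^2) / (r^2 * (r + 1)^2)"
    using r0 by (simp add: field_simps)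
  moreover have "(r + 1)^2 - r^2 = 2 * r + 1"
    by (simp add: power2_eq_square algebra_simps)
  ultimately show ?thesis
    by simp
qed

lemma fourth_power_increment_le:
  fixes r A B :: real
  assumes r: "1 \<le> r"
  shows "6 * (B / r)^2 * (2 * B^2 / (r + 1)) + 4 * A * (B / r)^3 + (B / r)^4
    \<le> (12 * B^4 + 4 * A * B^3 + B^4) / r^3"
proof -
  have r0: "0 < r"
    using r by simp
  have "6 * (B / r)^2 * (2 * B^2 / (r + 1)) = 12 * B^4 / (r^2 * (r + 1))"
    using r0 by (simp add: power_divide field_simps power2_eq_square power4_eq_xxxx)
  also have "\<dots> \<le> 12 * B^4 / (r^2 * r)"
    using r0 by (intro divide_left_mono mult_left_mono) auto
  finally have "6 * (B / r)^2 * (2 * B^2 / (r + 1)) \<le> 12 * B^4 / r^3"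
    by (simp add: power3_eq_cube power2_eq_square mult_ac)
  moreover have "(B / r)^4 \<le> B^4 / r^3"
  proof -
    have "(B / r)^4 = B^4 / (r^3 * r)"
      by (simp add: power_divide power4_eq_xxxx power3_eq_cube mult_ac)
    also have "\<dots> \<le> B^4 / (r^3 * 1)"
      using r0 r by (intro divide_left_mono mult_left_mono) auto
    finally show ?thesis
      by simp
  qed
  moreover have "4 * A * (B / r)^3 = 4 * A * B^3 / r^3"
    by (simp add: power_divide)
  moreover have "(12 * B^4 + 4 * A * B^3 + B^4) / r^3 = 12 * B^4 / r^3 + 4 * A * B^3 / r^3 + B^4 / r^3"
    by (simp add: add_divide_distrib)
  ultimately show ?thesis
    by linarith
qed

lemma martingale_moment_bounds:
  fixes y :: "nat \<Rightarrow> (nat \<Rightarrow> nat) \<Rightarrow> real" and A B :: real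
  defines "G \<equiv> 12 * B^4 + 4 * A * B^3 + B^4"
  assumes q_nonneg: "\<forall>k<K. 0 \<le> q k" and q_sum: "(\<Sum>k<K. q k) = 1"
    and A: "0 \<le> A" and B: "0 \<le> B"
    and start: "\<And>ks. ks \<in> type_seqs K n \<Longrightarrow> y 0 ks = 0"
    and adapted: "\<And>t ks k. t < n \<Longrightarrow> ks \<in> type_seqs K n \<Longrightarrow> k < K \<Longrightarrow> y t (ks(t := k)) = y t ks"
    and bounded: "\<And>t ks. t < n \<Longrightarrow> ks \<in> type_seqs K n \<Longrightarrow> \<bar>y t ks\<bar> \<le> A"
    and incr_bound: "\<And>t ks. Suc t < n \<Longrightarrow> ks \<in> type_seqs K n \<Longrightarrow>
      \<bar>y (Suc t) ks - y t ks\<bar> \<le> B / real (n - Suc t)"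
    and incr_mean_zero: "\<And>t ks. Suc t < n \<Longrightarrow> ks \<in> type_seqs K n \<Longrightarrow>
      (\<Sum>k<K. q k * (y (Suc t) (ks(t := k)) - y t (ks(t := k)))) = 0"
  shows "t < n \<Longrightarrow> expect_seq K q n (y t) = 0 \<and>
    expect_seq K q n (\<lambda>ks. (y t ks)^2) \<le> 2 * B^2 / real (n - t) \<and>
    expect_seq K q n (\<lambda>ks. (y t ks)^4) \<le> 2 * G / (real (n - t))^2"
proof (induction t)
  case 0
  have "expect_seq K q n (\<lambda>ks. (y 0 ks)^i) = expect_seq K q n (\<lambda>_. 0 ^ i)" for i
    by (rule expect_seq_cong) (simp add: start)
  then have "expect_seq K q n (\<lambda>ks. (y 0 ks)^i) = 0 ^ i" for i
    by (simp add: expect_seq_const[OF q_sum])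
  from this[of 1] this[of 2] this[of 4] show ?case
    unfolding G_def using A B by simp
next
  case (Suc t)
  have t: "t < n"
    using Suc.prems by simp
  define r where "r = real (n - Suc t)"
  have r: "1 \<le> r" and r_Suc: "real (n - t) = r + 1"
    unfolding r_def using Suc.prems by auto
  define xi where "xi = (\<lambda>ks. y (Suc t) ks - y t ks)"
  have y_Suc: "y (Suc t) = (\<lambda>ks. y t ks + xi ks)"
    unfolding xi_def by simp
  have xi_bound: "\<bar>xi ks\<bar> \<le> B / r" if "ks \<in> type_seqs K n" for ks
    using incr_bound[OF Suc.prems that] unfolding xi_def r_def .
  have orth: "expect_seq K q n (\<lambda>ks. y t ks ^ i * xi ks) = 0" for i
    using adapted[OF t] incr_mean_zero[OF Suc.prems]
    by (intro expect_seq_mult_mean_zero[OF t q_sum]) (auto simp: xi_def)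
  note step = expect_seq_moments_add_increment[OF q_nonneg q_sum xi_bound bounded[OF t] orth]
  note IH = Suc.IH[OF t, unfolded r_Suc]
  have "expect_seq K q n (y (Suc t)) = 0"
    using step(1) IH unfolding y_Suc by simp
  moreover have "expect_seq K q n (\<lambda>ks. (y (Suc t) ks)^2) \<le> 2 * B^2 / (r + 1) + B^2 / r^2"
    using step(2) IH unfolding y_Suc power_divide by linarith
  moreover have "expect_seq K q n (\<lambda>ks. (y (Suc t) ks)^4) \<le> 2 * G / (r + 1)^2 + G / r^3"
  proof -
    have "6 * (B / r)^2 * expect_seq K q n (\<lambda>ks. (y t ks)^2) \<le> 6 * (B / r)^2 * (2 * B^2 / (r + 1))"
      using IH by (intro mult_left_mono) auto
    then show ?thesis
      using step(3) IH fourth_power_increment_le[OF r, of B A] unfolding y_Suc G_def by linarith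
  qed
  moreover have "0 \<le> G"
    unfolding G_def using A B by simp
  ultimately show ?case
    using inverse_recursion_le[OF r, of "B^2"] inverse_square_recursion_le[OF r, of G]
    unfolding r_def by simp
qed

lemma sum_inverse_countdown_le:
  assumes "0 < n"
  shows "(\<Sum>t<n. 1 / real (n - t)) \<le> 1 + ln (real n)"
proof -
  have "(\<Sum>t<n. 1 / real (n - t)) = harm n"
    unfolding harm_altdef by (subst sum.nat_diff_reindex[symmetric]) (simp add: Suc_diff_Suc field_simps)
  also have "harm n - ln (real n) \<le> harm 1 - ln (real 1)"
    using assms by (intro euler_mascheroni_sequence_decreasing) auto
  then have "harm n \<le> 1 + ln (real n)"
    by (simp add: harm_def)
  finally show ?thesis .
qed

lemma sum_inverse_square_countdown_le:
  "(\<Sum>t<n. 1 / (real (n - t))^2) \<le> 2"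
proof -
  have "(\<Sum>i<n. 1 / (real (Suc i))^2) \<le> 2 - 2 / real (Suc n)"
  proof (induction n)
    case (Suc n)
    define x where "x = real (Suc n)"
    have x: "1 \<le> x"
      unfolding x_def by simp
    have "1 / x^2 = 2 / (x * (2 * x))"
      by (simp add: power2_eq_square)
    also have "\<dots> \<le> 2 / (x * (x + 1))"
      using x by (intro divide_left_mono mult_left_mono mult_pos_pos) auto
    also have "\<dots> = 2 / x - 2 / (x + 1)"
      using x by (simp add: field_simps)
    finally have "1 / (real (Suc n))^2 \<le> 2 / real (Suc n) - 2 / real (Suc (Suc n))"
      unfolding x_def by simp
    with Suc.IH show ?case
      by simp
  qed simp
  moreover have "(\<Sum>t<n. 1 / (real (n - t))^2) = (\<Sum>i<n. 1 / (real (Suc i))^2)"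
    by (subst sum.nat_diff_reindex[symmetric]) (simp add: Suc_diff_Suc)
  moreover have "0 \<le> 2 / real (Suc n)"
    by simp
  ultimately show ?thesis
    by linarith
qed

lemma ln_ge_one_minus_inverse:
  fixes x :: real
  assumes "0 < x"
  shows "1 - 1 / x \<le> ln x"
  using ln_le_minus_one[of "1 / x"] assms by (simp add: ln_div)

lemma ln_transfer_gain_pos:
  fixes a b W W' e :: real
  assumes a: "0 \<le> a" and b: "0 \<le> b" and W: "0 < W" and W': "0 < W'" and gap: "W * a < W' * b"
    and e: "0 < e" "e \<le> 1 / (2 * a + 2)" "e \<le> 1 / (b + 1)"
    and e_gap: "e \<le> (W' * b - W * a) / (2 * (2 * W * a^2 + W' * b^2) + 1)"
  shows "0 < W * ln (1 - a * e) + W' * ln (1 + b * e)"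
proof -
  define X where "X = 2 * W * a^2 + W' * b^2"
  have X: "0 \<le> X"
    unfolding X_def using W W' by simp
  have "a * e \<le> a * (1 / (2 * a + 2))"
    using a e by (intro mult_left_mono) auto
  then have "- (a * e) - 2 * (a * e)^2 \<le> ln (1 - a * e)"
    using a e by (intro ln_one_minus_pos_lower_bound) (auto simp: field_simps)
  moreover have "b * e \<le> b * (1 / (b + 1))"
    using b e by (intro mult_left_mono) auto
  then have "b * e - (b * e)^2 \<le> ln (1 + b * e)"
    using b e by (intro ln_one_plus_pos_lower_bound) (auto simp: field_simps)
  ultimately have "W * (- (a * e) - 2 * (a * e)^2) + W' * (b * e - (b * e)^2)
      \<le> W * ln (1 - a * e) + W' * ln (1 + b * e)"
    using W W' by (intro add_mono mult_left_mono) auto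
  moreover have "W * (- (a * e) - 2 * (a * e)^2) + W' * (b * e - (b * e)^2) = e * ((W' * b - W * a) - e * X)"
    unfolding X_def by (simp add: algebra_simps power2_eq_square)
  moreover have "e * X < W' * b - W * a"
  proof -
    have "e * X \<le> (W' * b - W * a) / (2 * X + 1) * X"
      using e_gap X unfolding X_def by (intro mult_right_mono) auto
    also have "\<dots> < W' * b - W * a"
      using mult_strict_right_mono[OF gap, of "X + 1"] X by (simp add: field_simps)
    finally show ?thesis .
  qed
  ultimately show ?thesis
    using e by (smt (verit) mult_pos_pos)
qed

lemma convex_comb_square_le:
  fixes \<theta> x :: "nat \<Rightarrow> real"
  assumes \<theta>: "\<forall>j<m. 0 \<le> \<theta> j" "(\<Sum>j<m. \<theta> j) = 1"
  shows "(\<Sum>j<m. \<theta> j * x j)^2 \<le> real m * (\<Sum>j<m. (x j)^2)"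
proof -
  have "\<theta> j \<le> 1" if "j < m" for j
    using member_le_sum[of j "{..<m}" \<theta>] \<theta> that by auto
  then have "\<bar>\<theta> j * x j\<bar> \<le> \<bar>x j\<bar>" if "j < m" for j
    using \<theta> that by (simp add: abs_mult mult_left_le_one_le)
  then have "\<bar>\<Sum>j<m. \<theta> j * x j\<bar> \<le> (\<Sum>j<m. \<bar>x j\<bar>)"
    by (intro order_trans[OF sum_abs sum_mono]) auto
  then have "(\<Sum>j<m. \<theta> j * x j)^2 \<le> (\<Sum>j<m. \<bar>x j\<bar>)^2"
    using power_mono[of "\<bar>\<Sum>j<m. \<theta> j * x j\<bar>" _ 2] by simp
  also have "\<dots> \<le> (\<Sum>j<m. \<bar>x j\<bar>^2) * card {..<m}"
    by (rule sum_squared_le_sum_of_squares)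
  finally show ?thesis
    by (simp add: mult.commute)
qed

lemma ln_convex_comb_ge:
  fixes \<theta> x :: "nat \<Rightarrow> real" and \<rho> :: real
  assumes \<theta>: "\<forall>j<m. 0 \<le> \<theta> j" "(\<Sum>j<m. \<theta> j) = 1" and \<rho>: "0 < \<rho>" "\<forall>j<m. \<rho> \<le> 1 + x j"
  shows "(\<Sum>j<m. \<theta> j * x j) - real m * (\<Sum>j<m. (x j)^2) / \<rho> \<le> ln (\<Sum>j<m. \<theta> j * (1 + x j))"
proof -
  define s where "s = (\<Sum>j<m. \<theta> j * x j)"
  have comb: "(\<Sum>j<m. \<theta> j * (1 + x j)) = 1 + s"
    unfolding s_def using \<theta> by (simp add: distrib_left sum.distrib)
  have "\<rho> = (\<Sum>j<m. \<theta> j * \<rho>)"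
    using \<theta> by (simp add: sum_distrib_right[symmetric])
  also have "\<dots> \<le> 1 + s"
    unfolding comb[symmetric] using \<theta> \<rho> by (intro sum_mono mult_left_mono) auto
  finally have \<rho>_s: "\<rho> \<le> 1 + s" .
  have "s^2 / (1 + s) \<le> s^2 / \<rho>"
    using \<rho> \<rho>_s by (intro divide_left_mono mult_pos_pos) auto
  also have "\<dots> \<le> real m * (\<Sum>j<m. (x j)^2) / \<rho>"
    unfolding s_def using convex_comb_square_le[OF \<theta>] \<rho> by (intro divide_right_mono) auto
  finally have "s^2 / (1 + s) \<le> real m * (\<Sum>j<m. (x j)^2) / \<rho>" .
  moreover have "1 - 1 / (1 + s) = s - s^2 / (1 + s)"
    using \<rho> \<rho>_s by (simp add: field_simps power2_eq_square)
  moreover have "1 - 1 / (1 + s) \<le> ln (1 + s)"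
    using \<rho> \<rho>_s by (intro ln_ge_one_minus_inverse) auto
  ultimately show ?thesis
    unfolding comb s_def[symmetric] by linarith
qed

section \<open>Optimal solutions of the certainty-equivalent problem\<close>

definition bump :: "(nat \<Rightarrow> nat \<Rightarrow> real) \<Rightarrow> nat \<Rightarrow> nat \<Rightarrow> real \<Rightarrow> nat \<Rightarrow> nat \<Rightarrow> real" where
  "bump z k j e = (\<lambda>k' i. z k' i + (if k' = k \<and> i = j then e else 0))"

lemma sum_util_bump:
  assumes "j < m"
  shows "(\<Sum>i<m. u k' i * bump z k j e k' i) =
    (\<Sum>i<m. u k' i * z k' i) + (if k' = k then u k j * e else 0)"
proof -
  have "(\<Sum>i<m. u k' i * bump z k j e k' i) =
      (\<Sum>i<m. u k' i * z k' i) + (\<Sum>i<m. u k' i * (if k' = k \<and> i = j then e else 0))"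
    by (simp add: bump_def distrib_left sum.distrib)
  also have "(\<Sum>i<m. u k' i * (if k' = k \<and> i = j then e else 0)) = (if k' = k then u k j * e else 0)"
    using assms by (cases "k' = k") (auto simp: if_distrib cong: if_cong)
  finally show ?thesis .
qed

lemma sum_load_bump:
  assumes "k < K"
  shows "(\<Sum>k'<K. q k' * bump z k j e k' i) =
    (\<Sum>k'<K. q k' * z k' i) + (if i = j then q k * e else 0)"
proof -
  have "(\<Sum>k'<K. q k' * bump z k j e k' i) =
      (\<Sum>k'<K. q k' * z k' i) + (\<Sum>k'<K. q k' * (if k' = k \<and> i = j then e else 0))"
    by (simp add: bump_def distrib_left sum.distrib)
  also have "(\<Sum>k'<K. q k' * (if k' = k \<and> i = j then e else 0)) = (if i = j then q k * e else 0)"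
    using assms by (cases "i = j") (auto simp: if_distrib cong: if_cong)
  finally show ?thesis .
qed

locale fisher_market =
  fixes m K :: nat and q w :: "nat \<Rightarrow> real" and u :: "nat \<Rightarrow> nat \<Rightarrow> real"
    and d Delta :: "nat \<Rightarrow> real" and sol :: "(nat \<Rightarrow> real) \<Rightarrow> nat \<Rightarrow> nat \<Rightarrow> real"
  assumes q_pos: "\<forall>k<K. 0 < q k"
    and q_sum: "(\<Sum>k<K. q k) = 1"
    and w_pos: "\<forall>k<K. 0 < w k"
    and u_nonneg: "\<forall>k<K. \<forall>j<m. 0 \<le> u k j"
    and u_good: "\<forall>j<m. \<exists>k<K. 0 < u k j"
    and d_pos: "\<forall>j<m. 0 < d j"
    and Delta: "\<forall>j<m. 0 < Delta j \<and> Delta j < d j"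
    and sol_opt: "\<forall>d'. in_box m d Delta d' \<longrightarrow> CE_optimal m K q w u d' (sol d')"
begin

abbreviation in_dbox :: "(nat \<Rightarrow> real) \<Rightarrow> bool" where
  "in_dbox \<equiv> in_box m d Delta"

text \<open>Inserting 1 is harmless (every q k is at most 1) and keeps Min defined when K = 0.\<close>

definition q_min :: real where
  "q_min = Min (insert 1 (q ` {..<K}))"

definition alloc_bound :: "nat \<Rightarrow> real" where
  "alloc_bound j = (d j + Delta j) / q_min"

definition sol_util :: "(nat \<Rightarrow> real) \<Rightarrow> nat \<Rightarrow> real" where
  "sol_util d' k = (\<Sum>j<m. u k j * sol d' k j)"

lemma q_nonneg: "\<forall>k<K. 0 \<le> q k"
  using q_pos by (simp add: less_imp_le)

lemma q_min_pos: "0 < q_min"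
  unfolding q_min_def using q_pos by (subst Min_gr_iff) auto

lemma q_min_le: "k < K \<Longrightarrow> q_min \<le> q k"
  unfolding q_min_def by (rule Min_le) auto

lemma q_min_le_one: "q_min \<le> 1"
  unfolding q_min_def by (rule Min_le) auto

lemma in_dbox_center: "in_dbox d"
  unfolding in_box_def using Delta by auto

lemma in_dboxD: "in_dbox d' \<Longrightarrow> j < m \<Longrightarrow> d j - Delta j \<le> d' j \<and> d' j \<le> d j + Delta j"
  unfolding in_box_def by auto

lemma in_dbox_pos: "in_dbox d' \<Longrightarrow> j < m \<Longrightarrow> 0 < d' j"
  using in_dboxD[of d' j] Delta by force

lemma sol_feasible: "in_dbox d' \<Longrightarrow> CE_feasible m K q u d' (sol d')"
  using sol_opt unfolding CE_optimal_def by auto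

lemma sol_optimal: "in_dbox d' \<Longrightarrow> CE_feasible m K q u d' z \<Longrightarrow> CE_obj m K q w u z \<le> CE_obj m K q w u (sol d')"
  using sol_opt unfolding CE_optimal_def by auto

lemma sol_nonneg: "in_dbox d' \<Longrightarrow> k < K \<Longrightarrow> j < m \<Longrightarrow> 0 \<le> sol d' k j"
  using sol_feasible[of d'] unfolding CE_feasible_def CE_dom_def by auto

lemma sol_util_pos: "in_dbox d' \<Longrightarrow> k < K \<Longrightarrow> 0 < sol_util d' k"
  using sol_feasible[of d'] unfolding CE_feasible_def CE_dom_def sol_util_def by auto

lemma sol_load_le: "in_dbox d' \<Longrightarrow> j < m \<Longrightarrow> (\<Sum>k<K. q k * sol d' k j) \<le> d' j"
  using sol_feasible[of d'] unfolding CE_feasible_def by auto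

lemma alloc_bound_pos: "j < m \<Longrightarrow> 0 < alloc_bound j"
  unfolding alloc_bound_def using q_min_pos Delta d_pos by auto

lemma sol_le_alloc_bound:
  assumes "in_dbox d'" "k < K" "j < m"
  shows "sol d' k j \<le> alloc_bound j"
proof -
  have "q_min * sol d' k j \<le> q k * sol d' k j"
    using q_min_le[OF assms(2)] sol_nonneg[OF assms] by (intro mult_right_mono) auto
  also have "\<dots> \<le> (\<Sum>k<K. q k * sol d' k j)"
    using assms q_nonneg sol_nonneg[OF assms(1) _ assms(3)] by (intro member_le_sum) auto
  also have "\<dots> \<le> d j + Delta j"
    using sol_load_le[OF assms(1,3)] in_dboxD[OF assms(1,3)] by linarith
  finally show ?thesis
    unfolding alloc_bound_def using q_min_pos by (simp add: field_simps)
qed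

lemma in_dbox_le_alloc_bound:
  assumes "in_dbox d'" "j < m"
  shows "d' j \<le> alloc_bound j"
proof -
  have "(d j + Delta j) * q_min \<le> d j + Delta j"
    using q_min_pos q_min_le_one Delta d_pos assms(2) by (intro mult_left_le) auto
  then have "d j + Delta j \<le> alloc_bound j"
    using q_min_pos unfolding alloc_bound_def by (simp add: le_divide_eq)
  then show ?thesis
    using in_dboxD[OF assms] by linarith
qed

lemma abs_diff_sol_le_alloc_bound:
  assumes "in_dbox d'" "k < K" "j < m"
  shows "\<bar>d' j - sol d' k j\<bar> \<le> alloc_bound j"
  using sol_le_alloc_bound[OF assms] in_dbox_le_alloc_bound[OF assms(1,3)]
    in_dbox_pos[OF assms(1,3)] sol_nonneg[OF assms] by auto

lemma CE_obj_less_if_util_less: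
  assumes "\<forall>k<K. 0 < (\<Sum>j<m. u k j * z k j)" "\<forall>k<K. (\<Sum>j<m. u k j * z k j) \<le> (\<Sum>j<m. u k j * z' k j)"
    and "k0 < K" "(\<Sum>j<m. u k0 j * z k0 j) < (\<Sum>j<m. u k0 j * z' k0 j)"
  shows "CE_obj m K q w u z < CE_obj m K q w u z'"
  unfolding CE_obj_def
proof (rule sum_strict_mono_ex1)
  show "\<forall>k\<in>{..<K}. q k * w k * ln (\<Sum>j<m. u k j * z k j) \<le> q k * w k * ln (\<Sum>j<m. u k j * z' k j)"
    using assms(1,2) q_pos w_pos by (auto intro!: mult_left_mono ln_mono simp: less_imp_le)
  have "0 < (\<Sum>j<m. u k0 j * z' k0 j)"
    using assms(1,3,4) by (meson less_trans)
  then show "\<exists>k\<in>{..<K}. q k * w k * ln (\<Sum>j<m. u k j * z k j) < q k * w k * ln (\<Sum>j<m. u k j * z' k j)"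
    using assms q_pos w_pos by (intro bexI[of _ k0]) auto
qed auto

text \<open>Otherwise the unused capacity of a good could be given to a type that values it.\<close>

lemma sol_load_eq:
  assumes box: "in_dbox d'" and j: "j < m"
  shows "(\<Sum>k<K. q k * sol d' k j) = d' j"
proof (rule ccontr)
  let ?S = "\<Sum>k<K. q k * sol d' k j"
  assume "?S \<noteq> d' j"
  with sol_load_le[OF box j] have slack: "0 < d' j - ?S"
    by auto
  obtain k0 where k0: "k0 < K" "0 < u k0 j"
    using u_good j by auto
  define z where "z = bump (sol d') k0 j ((d' j - ?S) / q k0)"
  have util_z: "(\<Sum>i<m. u k i * z k i) = sol_util d' k + (if k = k0 then u k0 j * ((d' j - ?S) / q k0) else 0)" for k
    unfolding z_def sol_util_def using sum_util_bump[OF j] by simp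
  have gain: "0 < u k0 j * ((d' j - ?S) / q k0)"
    using k0 q_pos slack by simp
  have "CE_feasible m K q u d' z"
    unfolding CE_feasible_def CE_dom_def
  proof (intro conjI allI impI CollectI)
    show "0 \<le> z k i" if "k < K" "i < m" for k i
      unfolding z_def bump_def using sol_nonneg[OF box that] slack k0 q_pos by auto
    show "0 < (\<Sum>i<m. u k i * z k i)" if "k < K" for k
      unfolding util_z using sol_util_pos[OF box that] gain by auto
    show "(\<Sum>k<K. q k * z k i) \<le> d' i" if "i < m" for i
      unfolding z_def sum_load_bump[OF k0(1)] using sol_load_le[OF box that] k0 q_pos by auto
  qed
  moreover have "CE_obj m K q w u (sol d') < CE_obj m K q w u z"
    by (rule CE_obj_less_if_util_less[OF _ _ k0(1)])
      (use util_z sol_util_pos[OF box] gain in \<open>auto simp: sol_util_def\<close>)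
  ultimately show False
    using sol_optimal[OF box] by fastforce
qed

lemma sol_transfer_no_gain:
  fixes d' :: "nat \<Rightarrow> real" and j :: nat
  defines "a \<equiv> \<lambda>k. u k j / (q k * sol_util d' k)"
  assumes box: "in_dbox d'" and j: "j < m" and k: "k < K" and k': "k' < K" and kk': "k \<noteq> k'"
    and e: "0 \<le> e" "e \<le> q k * sol d' k j" "a k * e < 1"
  shows "q k * w k * ln (1 - a k * e) + q k' * w k' * ln (1 + a k' * e) \<le> 0"
proof -
  define f where "f = (\<lambda>k''. if k'' = k then 1 - a k * e else if k'' = k' then 1 + a k' * e else 1)"
  \<comment> \<open>Move e / q k units of good j away from type k and e / q k' units to type k': no load changes.\<close>
  define z where "z = bump (bump (sol d') k' j (e / q k')) k j (- (e / q k))"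
  have "0 \<le> a k' * e"
    unfolding a_def using e u_nonneg q_pos sol_util_pos[OF box k'] j k' by (simp add: divide_nonneg_pos)
  then have f_pos: "0 < f k''" for k''
    unfolding f_def using e(3) by auto
  have util_z: "(\<Sum>i<m. u k'' i * z k'' i) = sol_util d' k'' * f k''" if "k'' < K" for k''
    unfolding z_def sum_util_bump[OF j] using kk' sol_util_pos[OF box k] sol_util_pos[OF box k'] q_pos k k'
    by (auto simp: f_def a_def sol_util_def field_simps)
  have "CE_feasible m K q u d' z"
    unfolding CE_feasible_def CE_dom_def
  proof (intro conjI allI impI CollectI)
    show "0 \<le> z k'' i" if "k'' < K" "i < m" for k'' i
      using sol_nonneg[OF box that] e q_pos k k' unfolding z_def bump_def
      by (auto simp: field_simps)
    show "0 < (\<Sum>i<m. u k'' i * z k'' i)" if "k'' < K" for k''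
      using util_z[OF that] sol_util_pos[OF box that] f_pos by simp
    show "(\<Sum>k''<K. q k'' * z k'' i) \<le> d' i" if "i < m" for i
      unfolding z_def sum_load_bump[OF k] sum_load_bump[OF k'] using sol_load_le[OF box that] q_pos k k' by auto
  qed
  then have "CE_obj m K q w u z \<le> CE_obj m K q w u (sol d')"
    by (rule sol_optimal[OF box])
  moreover have "CE_obj m K q w u z = CE_obj m K q w u (sol d') + (\<Sum>k''<K. q k'' * w k'' * ln (f k''))"
  proof -
    have "q k'' * w k'' * ln (\<Sum>i<m. u k'' i * z k'' i) =
        q k'' * w k'' * ln (sol_util d' k'') + q k'' * w k'' * ln (f k'')" if "k'' < K" for k''
      using util_z[OF that] sol_util_pos[OF box that] f_pos[of k''] by (simp add: ln_mult distrib_left)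
    then show ?thesis
      unfolding CE_obj_def sol_util_def[symmetric] sum.distrib[symmetric] by (intro sum.cong) auto
  qed
  moreover have "(\<Sum>k''<K. q k'' * w k'' * ln (f k'')) =
      q k * w k * ln (1 - a k * e) + q k' * w k' * ln (1 + a k' * e)"
    using kk' k k' by (simp add: f_def if_distrib sum.If_cases Int_absorb1 insert_Diff_if)
  ultimately show ?thesis
    by linarith
qed

lemma sol_bang_per_buck_max:
  assumes box: "in_dbox d'" and j: "j < m" and k: "k < K" and k': "k' < K" and pos: "0 < sol d' k j"
  shows "w k' * u k' j / sol_util d' k' \<le> w k * u k j / sol_util d' k"
proof (rule ccontr)
  define a where "a = u k j / (q k * sol_util d' k)"
  define b where "b = u k' j / (q k' * sol_util d' k')"
  define W where "W = q k * w k"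
  define W' where "W' = q k' * w k'"
  have V: "0 < sol_util d' k" "0 < sol_util d' k'"
    using sol_util_pos[OF box] k k' by auto
  have qk: "0 < q k" "0 < q k'"
    using q_pos k k' by auto
  have W: "0 < W" "0 < W'"
    unfolding W_def W'_def using q_pos w_pos k k' by auto
  have ab: "0 \<le> a" "0 \<le> b"
    unfolding a_def b_def using u_nonneg q_pos V j k k' by (auto intro!: divide_nonneg_pos)
  assume "\<not> ?thesis"
  then have gap: "W * a < W' * b"
    unfolding W_def W'_def a_def b_def using qk by (simp add: field_simps)
  then have "k \<noteq> k'"
    unfolding W_def W'_def a_def b_def by auto
  define e where "e = min (q k * sol d' k j)
    (min (1 / (2 * a + 2)) (min (1 / (b + 1)) ((W' * b - W * a) / (2 * (2 * W * a^2 + W' * b^2) + 1))))"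
  have e: "0 < e"
    unfolding e_def using qk pos ab W gap by (auto intro!: divide_pos_pos add_nonneg_pos)
  have e_le: "e \<le> q k * sol d' k j" "e \<le> 1 / (2 * a + 2)" "e \<le> 1 / (b + 1)"
    "e \<le> (W' * b - W * a) / (2 * (2 * W * a^2 + W' * b^2) + 1)"
    unfolding e_def by simp_all
  have "a * e \<le> a * (1 / (2 * a + 2))"
    using ab e_le by (intro mult_left_mono) auto
  also have "\<dots> < 1"
    using ab by (simp add: field_simps)
  finally have "q k * w k * ln (1 - a * e) + q k' * w k' * ln (1 + b * e) \<le> 0"
    using sol_transfer_no_gain[OF box j k k' \<open>k \<noteq> k'\<close> less_imp_le[OF e] e_le(1)]
    unfolding a_def b_def by simp
  moreover have "0 < W * ln (1 - a * e) + W' * ln (1 + b * e)"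
    by (rule ln_transfer_gain_pos[OF ab W gap e e_le(2-4)])
  ultimately show False
    unfolding W_def W'_def by linarith
qed

text \<open>The optimal dual prices of CE(d); by sol_bang_per_buck_max the maximum is attained by every
  type that consumes good j.\<close>

definition price :: "nat \<Rightarrow> real" where
  "price j = Max ((\<lambda>k. w k * u k j / sol_util d k) ` {..<K})"

lemma price_ge: "j < m \<Longrightarrow> k < K \<Longrightarrow> w k * u k j / sol_util d k \<le> price j"
  unfolding price_def by (intro Max_ge) auto

lemma price_eq:
  assumes "j < m" "k < K" "0 < sol d k j"
  shows "price j = w k * u k j / sol_util d k"
  unfolding price_def using sol_bang_per_buck_max[OF in_dbox_center assms(1,2) _ assms(3)] assms(2)
  by (intro Max_eqI) auto

lemma price_nonneg:
  assumes "j < m"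
  shows "0 \<le> price j"
proof -
  obtain k where "k < K"
    using u_good assms by auto
  then show ?thesis
    using price_ge[OF assms] w_pos u_nonneg sol_util_pos[OF in_dbox_center] assms
    by (meson divide_nonneg_pos less_imp_le mult_nonneg_nonneg order_trans)
qed

lemma price_sol_eq: "k < K \<Longrightarrow> (\<Sum>j<m. price j * sol d k j) = w k"
proof -
  assume k: "k < K"
  have "price j * sol d k j = w k / sol_util d k * (u k j * sol d k j)" if "j < m" for j
    using price_eq[OF that k] sol_nonneg[OF in_dbox_center k that] by (cases "sol d k j = 0") auto
  then have "(\<Sum>j<m. price j * sol d k j) = w k / sol_util d k * sol_util d k"
    unfolding sol_util_def by (simp add: sum_distrib_left)
  then show ?thesis
    using sol_util_pos[OF in_dbox_center k] by simp
qed

lemma price_d_eq: "(\<Sum>j<m. price j * d j) = (\<Sum>k<K. q k * w k)"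
proof -
  have "(\<Sum>j<m. price j * d j) = (\<Sum>j<m. price j * (\<Sum>k<K. q k * sol d k j))"
    using sol_load_eq[OF in_dbox_center] by simp
  also have "\<dots> = (\<Sum>k<K. q k * (\<Sum>j<m. price j * sol d k j))"
    by (simp add: sum_distrib_left sum.swap[of _ "{..<m}"] mult_ac)
  finally show ?thesis
    by (simp add: price_sol_eq)
qed

lemma log_utility_le_priced:
  assumes k: "k < K" and x: "\<forall>j<m. 0 \<le> x j" and pos: "0 < (\<Sum>j<m. u k j * x j)"
  shows "w k * ln (\<Sum>j<m. u k j * x j) \<le> w k * ln (sol_util d k) - w k + (\<Sum>j<m. price j * x j)"
proof -
  let ?y = "\<Sum>j<m. u k j * x j"
  let ?V = "sol_util d k"
  have V: "0 < ?V"
    using sol_util_pos[OF in_dbox_center k] .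
  have "ln ?y - ln ?V \<le> ?y / ?V - 1"
    using ln_le_minus_one[of "?y / ?V"] pos V by (simp add: ln_div)
  then have "w k * ln ?y \<le> w k * (ln ?V + ?y / ?V - 1)"
    using w_pos k by (intro mult_left_mono) auto
  also have "\<dots> = w k * ln ?V - w k + (\<Sum>j<m. w k * u k j / ?V * x j)"
    by (simp add: algebra_simps sum_divide_distrib sum_distrib_left)
  also have "(\<Sum>j<m. w k * u k j / ?V * x j) \<le> (\<Sum>j<m. price j * x j)"
    using price_ge[OF _ k] x by (intro sum_mono mult_right_mono) auto
  finally show ?thesis
    by simp
qed

text \<open>Weak duality with the prices of CE(d); the expectation of this bound is n times the value of
  CE(d).\<close>

definition offline_bound :: "nat \<Rightarrow> (nat \<Rightarrow> nat) \<Rightarrow> real" where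
  "offline_bound n ks =
    (\<Sum>t<n. w (ks t) * ln (sol_util d (ks t)) - w (ks t)) + real n * (\<Sum>k<K. q k * w k)"

lemma scaled_sol_offline_feasible:
  assumes ks: "ks \<in> type_seqs K n"
  shows "(\<forall>t<n. \<forall>j<m. 0 \<le> q_min * sol d (ks t) j) \<and>
    (\<forall>j<m. (\<Sum>t<n. q_min * sol d (ks t) j) \<le> real n * d j) \<and>
    (\<forall>t<n. 0 < (\<Sum>j<m. u (ks t) j * (q_min * sol d (ks t) j)))"
proof -
  have ks_lt: "t < n \<Longrightarrow> ks t < K" for t
    using ks by auto
  have "q_min * sol d (ks t) j \<le> d j" if "t < n" "j < m" for t j
  proof -
    have "q_min * sol d (ks t) j \<le> q (ks t) * sol d (ks t) j"
      using q_min_le ks_lt sol_nonneg[OF in_dbox_center] that by (intro mult_right_mono) auto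
    also have "\<dots> \<le> (\<Sum>k<K. q k * sol d k j)"
      using ks_lt[OF that(1)] q_nonneg sol_nonneg[OF in_dbox_center _ that(2)] by (intro member_le_sum) auto
    finally show ?thesis
      unfolding sol_load_eq[OF in_dbox_center that(2)] .
  qed
  then have "\<forall>j<m. (\<Sum>t<n. q_min * sol d (ks t) j) \<le> real n * d j"
    using sum_mono[of "{..<n}" "\<lambda>t. q_min * sol d (ks t) _" "\<lambda>_. d _"] by auto
  moreover have "(\<Sum>j<m. u (ks t) j * (q_min * sol d (ks t) j)) = q_min * sol_util d (ks t)" for t
    unfolding sol_util_def by (simp add: sum_distrib_left mult_ac)
  ultimately show ?thesis
    using q_min_pos sol_nonneg[OF in_dbox_center] sol_util_pos[OF in_dbox_center] ks_lt by auto
qed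

lemma offline_opt_le:
  assumes ks: "ks \<in> type_seqs K n"
  shows "offline_opt m w u d n ks \<le> offline_bound n ks"
  unfolding offline_opt_def
proof (rule cSup_least)
  show "{(\<Sum>t<n. w (ks t) * ln (\<Sum>j<m. u (ks t) j * x t j)) | x.
      (\<forall>t<n. \<forall>j<m. 0 \<le> x t j) \<and> (\<forall>j<m. (\<Sum>t<n. x t j) \<le> real n * d j) \<and>
      (\<forall>t<n. 0 < (\<Sum>j<m. u (ks t) j * x t j))} \<noteq> {}"
  proof -
    define x where "x = (\<lambda>t j. q_min * sol d (ks t) j)"
    have "(\<forall>t<n. \<forall>j<m. 0 \<le> x t j) \<and> (\<forall>j<m. (\<Sum>t<n. x t j) \<le> real n * d j) \<and>
        (\<forall>t<n. 0 < (\<Sum>j<m. u (ks t) j * x t j))"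
      unfolding x_def by (rule scaled_sol_offline_feasible[OF ks])
    then show ?thesis
      by blast
  qed
next
  fix y
  assume "y \<in> {(\<Sum>t<n. w (ks t) * ln (\<Sum>j<m. u (ks t) j * x t j)) | x.
      (\<forall>t<n. \<forall>j<m. 0 \<le> x t j) \<and> (\<forall>j<m. (\<Sum>t<n. x t j) \<le> real n * d j) \<and>
      (\<forall>t<n. 0 < (\<Sum>j<m. u (ks t) j * x t j))}"
  then obtain x where y: "y = (\<Sum>t<n. w (ks t) * ln (\<Sum>j<m. u (ks t) j * x t j))"
    and x_nonneg: "\<forall>t<n. \<forall>j<m. 0 \<le> x t j" and x_cap: "\<forall>j<m. (\<Sum>t<n. x t j) \<le> real n * d j"
    and x_pos: "\<forall>t<n. 0 < (\<Sum>j<m. u (ks t) j * x t j)"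
    by blast
  have "y \<le> (\<Sum>t<n. w (ks t) * ln (sol_util d (ks t)) - w (ks t) + (\<Sum>j<m. price j * x t j))"
    unfolding y using ks x_nonneg x_pos by (intro sum_mono log_utility_le_priced) auto
  also have "\<dots> = (\<Sum>t<n. w (ks t) * ln (sol_util d (ks t)) - w (ks t)) + (\<Sum>j<m. price j * (\<Sum>t<n. x t j))"
    by (simp add: sum.distrib sum_distrib_left sum.swap[of _ "{..<m}"])
  also have "(\<Sum>j<m. price j * (\<Sum>t<n. x t j)) \<le> (\<Sum>j<m. price j * (real n * d j))"
    using x_cap price_nonneg by (intro sum_mono mult_left_mono) auto
  also have "\<dots> = real n * (\<Sum>k<K. q k * w k)"
    using price_d_eq by (simp add: sum_distrib_left[symmetric] mult.left_commute)
  finally show "y \<le> offline_bound n ks"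
    unfolding offline_bound_def by simp
qed

section \<open>A second-order lower bound on the value of CE(d')\<close>

definition ratio_min :: real where
  "ratio_min = Min (insert 1 ((\<lambda>j. (d j - Delta j) / d j) ` {..<m}))"

definition ce_value :: "(nat \<Rightarrow> real) \<Rightarrow> real" where
  "ce_value d' = CE_obj m K q w u (sol d')"

definition curv_const :: real where
  "curv_const = real m * (\<Sum>k<K. q k * w k) / ratio_min"

lemma ratio_min_pos: "0 < ratio_min"
  unfolding ratio_min_def using Delta d_pos by (subst Min_gr_iff) auto

lemma ratio_min_le: "in_dbox d' \<Longrightarrow> j < m \<Longrightarrow> ratio_min \<le> d' j / d j"
proof -
  assume "in_dbox d'" "j < m"
  then have "(d j - Delta j) / d j \<le> d' j / d j"
    using in_dboxD d_pos by (intro divide_right_mono) auto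
  moreover have "ratio_min \<le> (d j - Delta j) / d j"
    unfolding ratio_min_def using \<open>j < m\<close> by (intro Min_le) auto
  ultimately show ?thesis
    by linarith
qed

lemma curv_const_nonneg: "0 \<le> curv_const"
  unfolding curv_const_def using ratio_min_pos q_nonneg w_pos
  by (intro divide_nonneg_pos mult_nonneg_nonneg sum_nonneg) (auto simp: less_imp_le)

lemma scaled_sol_feasible:
  assumes box: "in_dbox d'"
  shows "CE_feasible m K q u d' (\<lambda>k j. sol d k j * (d' j / d j))"
  unfolding CE_feasible_def CE_dom_def
proof (intro conjI allI impI CollectI)
  have ratio_pos: "0 < d' j / d j" if "j < m" for j
    using in_dbox_pos[OF box that] d_pos that by simp
  show "0 \<le> sol d k j * (d' j / d j)" if "k < K" "j < m" for k j
    using sol_nonneg[OF in_dbox_center that] ratio_pos[OF that(2)] by (intro mult_nonneg_nonneg) auto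
  show "0 < (\<Sum>j<m. u k j * (sol d k j * (d' j / d j)))" if k: "k < K" for k
  proof -
    have "0 < sol_util d k * ratio_min"
      using sol_util_pos[OF in_dbox_center k] ratio_min_pos by simp
    also have "\<dots> = (\<Sum>j<m. u k j * (sol d k j * ratio_min))"
      unfolding sol_util_def by (simp add: sum_distrib_right mult.assoc)
    also have "\<dots> \<le> (\<Sum>j<m. u k j * (sol d k j * (d' j / d j)))"
      using ratio_min_le[OF box] u_nonneg sol_nonneg[OF in_dbox_center k] k
      by (intro sum_mono mult_left_mono) auto
    finally show ?thesis .
  qed
  show "(\<Sum>k<K. q k * (sol d k j * (d' j / d j))) \<le> d' j" if "j < m" for j
  proof -
    have "(\<Sum>k<K. q k * (sol d k j * (d' j / d j))) = (\<Sum>k<K. q k * sol d k j) * (d' j / d j)"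
      by (simp add: sum_distrib_right mult.assoc del: times_divide_eq_right)
    also have "\<dots> = d' j"
      using sol_load_eq[OF in_dbox_center that] d_pos[rule_format, OF that] by simp
    finally show ?thesis
      by simp
  qed
qed

lemma price_mul_sol:
  assumes "k < K" "j < m"
  shows "price j * sol d k j = w k * (u k j * sol d k j / sol_util d k)"
  using price_eq[OF assms(2,1)] sol_nonneg[OF in_dbox_center assms] by (cases "sol d k j = 0") auto

lemma ln_util_scaled_sol_ge:
  assumes box: "in_dbox d'" and k: "k < K"
  shows "ln (sol_util d k) + (\<Sum>j<m. u k j * sol d k j / sol_util d k * ((d' j - d j) / d j))
      - real m * (\<Sum>j<m. ((d' j - d j) / d j)^2) / ratio_min
    \<le> ln (\<Sum>j<m. u k j * (sol d k j * (d' j / d j)))"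
proof -
  let ?V = "sol_util d k"
  define \<theta> where "\<theta> = (\<lambda>j. u k j * sol d k j / ?V)"
  define x where "x = (\<lambda>j. (d' j - d j) / d j)"
  have V: "0 < ?V"
    using sol_util_pos[OF in_dbox_center k] .
  have "(\<Sum>j<m. \<theta> j * x j) - real m * (\<Sum>j<m. (x j)^2) / ratio_min \<le> ln (\<Sum>j<m. \<theta> j * (1 + x j))"
  proof (rule ln_convex_comb_ge[OF _ _ ratio_min_pos])
    show "\<forall>j<m. 0 \<le> \<theta> j"
      unfolding \<theta>_def using u_nonneg sol_nonneg[OF in_dbox_center k] V k by simp
    show "(\<Sum>j<m. \<theta> j) = 1"
      unfolding \<theta>_def using V by (simp add: sum_divide_distrib[symmetric] sol_util_def)
    show "\<forall>j<m. ratio_min \<le> 1 + x j"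
      unfolding x_def using ratio_min_le[OF box] d_pos by (auto simp: diff_divide_distrib)
  qed
  moreover have util: "(\<Sum>j<m. u k j * (sol d k j * (d' j / d j))) = ?V * (\<Sum>j<m. \<theta> j * (1 + x j))"
  proof -
    have "?V * (\<theta> j * (1 + x j)) = u k j * (sol d k j * (d' j / d j))" if "j < m" for j
      unfolding \<theta>_def x_def using V d_pos[rule_format, OF that] by (simp add: field_simps)
    then show ?thesis
      by (simp add: sum_distrib_left)
  qed
  moreover have "0 < (\<Sum>j<m. \<theta> j * (1 + x j))"
  proof -
    have "0 < (\<Sum>j<m. u k j * (sol d k j * (d' j / d j)))"
      using scaled_sol_feasible[OF box] k unfolding CE_feasible_def CE_dom_def by blast
    then show ?thesis
      using V unfolding util by (simp add: zero_less_mult_iff)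
  qed
  ultimately show ?thesis
    using V unfolding \<theta>_def x_def by (simp add: ln_mult)
qed

lemma sum_marginal_utility_eq_price:
  "(\<Sum>k<K. q k * w k * (\<Sum>j<m. u k j * sol d k j / sol_util d k * v j)) = (\<Sum>j<m. price j * d j * v j)"
proof -
  have "q k * w k * (u k j * sol d k j / sol_util d k * v j) = q k * (price j * sol d k j) * v j"
    if "k < K" "j < m" for k j
    unfolding price_mul_sol[OF that] by simp
  then have "(\<Sum>k<K. q k * w k * (\<Sum>j<m. u k j * sol d k j / sol_util d k * v j)) =
      (\<Sum>j<m. \<Sum>k<K. q k * (price j * sol d k j) * v j)"
    unfolding sum_distrib_left sum.swap[of _ "{..<K}"] by simp
  also have "\<dots> = (\<Sum>j<m. price j * (\<Sum>k<K. q k * sol d k j) * v j)"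
    by (simp add: sum_distrib_left sum_distrib_right mult_ac)
  also have "\<dots> = (\<Sum>j<m. price j * d j * v j)"
    by (intro sum.cong refl) (simp add: sol_load_eq[OF in_dbox_center])
  finally show ?thesis .
qed

lemma ce_value_lower_bound:
  assumes box: "in_dbox d'"
  shows "ce_value d + (\<Sum>j<m. price j * (d' j - d j)) - curv_const * (\<Sum>j<m. ((d' j - d j) / d j)^2)
    \<le> ce_value d'"
proof -
  let ?Q = "\<Sum>j<m. ((d' j - d j) / d j)^2"
  let ?g = "\<lambda>k. \<Sum>j<m. u k j * sol d k j / sol_util d k * ((d' j - d j) / d j)"
  have "(\<Sum>k<K. q k * w k * (ln (sol_util d k) + ?g k - real m * ?Q / ratio_min))
      \<le> CE_obj m K q w u (\<lambda>k j. sol d k j * (d' j / d j))"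
    unfolding CE_obj_def using ln_util_scaled_sol_ge[OF box] q_nonneg w_pos
    by (intro sum_mono mult_left_mono) (auto simp: less_imp_le)
  also have "\<dots> \<le> ce_value d'"
    unfolding ce_value_def by (rule sol_optimal[OF box scaled_sol_feasible[OF box]])
  moreover have "(\<Sum>k<K. q k * w k * ?g k) = (\<Sum>j<m. price j * (d' j - d j))"
    unfolding sum_marginal_utility_eq_price using d_pos by (intro sum.cong) auto
  moreover have "(\<Sum>k<K. q k * w k * (ln (sol_util d k) + ?g k - real m * ?Q / ratio_min))
      = ce_value d + (\<Sum>k<K. q k * w k * ?g k) - curv_const * ?Q"
  proof -
    have "(\<Sum>k<K. q k * w k * (real m * ?Q / ratio_min)) = curv_const * ?Q"
      unfolding curv_const_def sum_distrib_right[symmetric] by simp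
    then show ?thesis
      unfolding ce_value_def CE_obj_def sol_util_def[symmetric]
      by (simp add: distrib_left right_diff_distrib sum.distrib sum_subtractf)
  qed
  ultimately show ?thesis
    by linarith
qed

section \<open>Dynamics of the adaptive policy\<close>

definition cap :: "nat \<Rightarrow> (nat \<Rightarrow> nat) \<Rightarrow> nat \<Rightarrow> nat \<Rightarrow> real" where
  "cap n ks t = fst (pol_state m d Delta sol n ks t)"

definition stayed :: "nat \<Rightarrow> (nat \<Rightarrow> nat) \<Rightarrow> nat \<Rightarrow> bool" where
  "stayed n ks t = snd (pol_state m d Delta sol n ks t)"

definition avg_cap :: "nat \<Rightarrow> (nat \<Rightarrow> nat) \<Rightarrow> nat \<Rightarrow> nat \<Rightarrow> real" where
  "avg_cap n ks t = pol_d m n (cap n ks t) t"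

abbreviation used :: "nat \<Rightarrow> (nat \<Rightarrow> nat) \<Rightarrow> nat \<Rightarrow> nat \<Rightarrow> real" where
  "used \<equiv> pol_used_d m d Delta sol"

lemma cap_0: "cap n ks 0 = (\<lambda>j. real n * d j)"
  unfolding cap_def by simp

lemma stayed_0: "stayed n ks 0"
  unfolding stayed_def by simp

lemma stayed_Suc: "stayed n ks (Suc t) \<longleftrightarrow> stayed n ks t \<and> in_dbox (avg_cap n ks t)"
  unfolding stayed_def avg_cap_def cap_def by (simp add: Let_def split: prod.split)

lemma used_eq: "used n ks t = (if stayed n ks (Suc t) then avg_cap n ks t else d)"
  unfolding pol_used_d_def stayed_Suc unfolding stayed_def avg_cap_def cap_def by (simp split: prod.split)

lemma cap_Suc: "cap n ks (Suc t) j = cap n ks t j - sol (used n ks t) (ks t) j"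
  unfolding cap_def used_eq unfolding stayed_def avg_cap_def cap_def by (simp add: Let_def split: prod.split)

lemma in_dbox_used: "in_dbox (used n ks t)"
  unfolding used_eq stayed_Suc using in_dbox_center by auto

lemma cap_eq_avg_cap: "t < n \<Longrightarrow> cap n ks t j = real (n - t) * avg_cap n ks t j"
  unfolding avg_cap_def pol_d_def by simp

lemma avg_cap_0: "0 < n \<Longrightarrow> avg_cap n ks 0 = d"
  unfolding avg_cap_def cap_0 pol_d_def by auto

lemma pol_state_cong: "(\<And>s. s < t \<Longrightarrow> ks s = ks' s) \<Longrightarrow>
    pol_state m d Delta sol n ks t = pol_state m d Delta sol n ks' t"
proof (induction t)
  case (Suc t)
  then have "pol_state m d Delta sol n ks t = pol_state m d Delta sol n ks' t" "ks t = ks' t"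
    by auto
  then show ?case
    by (simp add: Let_def split: prod.split)
qed simp

lemma pol_state_upd: "pol_state m d Delta sol n (ks(t := k)) t = pol_state m d Delta sol n ks t"
  by (rule pol_state_cong) simp

text \<open>The process d_t stopped at its first exit from the box.\<close>

fun stopped_avg_cap :: "nat \<Rightarrow> (nat \<Rightarrow> nat) \<Rightarrow> nat \<Rightarrow> nat \<Rightarrow> real" where
  "stopped_avg_cap n ks 0 = d"
| "stopped_avg_cap n ks (Suc t) =
    (if stayed n ks (Suc t) then avg_cap n ks (Suc t) else stopped_avg_cap n ks t)"

lemma stopped_avg_cap_upd: "stopped_avg_cap n (ks(t := k)) t = stopped_avg_cap n ks t"
proof -
  have "(\<And>s. s < t' \<Longrightarrow> ks s = ks' s) \<Longrightarrow> stopped_avg_cap n ks t' = stopped_avg_cap n ks' t'" for ks' t'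
  proof (induction t')
    case (Suc t')
    have "pol_state m d Delta sol n ks (Suc t') = pol_state m d Delta sol n ks' (Suc t')"
      using Suc.prems by (rule pol_state_cong)
    then have "stayed n ks (Suc t') = stayed n ks' (Suc t')" "avg_cap n ks (Suc t') = avg_cap n ks' (Suc t')"
      unfolding stayed_def avg_cap_def cap_def by simp_all
    then show ?case
      using Suc by simp
  qed simp
  from this[of t "ks(t := k)"] show ?thesis
    by auto
qed

lemma stopped_avg_cap_eq: "0 < n \<Longrightarrow> stayed n ks t \<Longrightarrow> stopped_avg_cap n ks t = avg_cap n ks t"
  by (cases t) (simp_all add: avg_cap_0)

lemma stopped_avg_cap_exit: "0 < n \<Longrightarrow> \<not> stayed n ks (Suc t) \<Longrightarrow> \<not> in_dbox (stopped_avg_cap n ks t)"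
proof (induction t)
  case 0
  then show ?case
    using stayed_Suc[of n ks 0] by (simp add: stayed_0 avg_cap_0)
next
  case (Suc t)
  then show ?case
    using stayed_Suc[of n ks "Suc t"] stopped_avg_cap_eq[OF Suc.prems(1), of ks "Suc t"]
    by (cases "stayed n ks (Suc t)") auto
qed

lemma stopped_avg_cap_incr:
  assumes "Suc t < n"
  shows "stopped_avg_cap n ks (Suc t) j - stopped_avg_cap n ks t j =
    (if stayed n ks (Suc t) then (avg_cap n ks t j - sol (avg_cap n ks t) (ks t) j) / real (n - Suc t) else 0)"
proof (cases "stayed n ks (Suc t)")
  case True
  then have "stopped_avg_cap n ks t = avg_cap n ks t" "used n ks t = avg_cap n ks t"
    using stopped_avg_cap_eq[of n ks t] assms stayed_Suc used_eq by auto
  moreover have "real (n - t) = real (n - Suc t) + 1" "0 < real (n - Suc t)"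
    using assms by auto
  ultimately show ?thesis
    using True cap_eq_avg_cap[of t n ks j] assms
    by (simp add: avg_cap_def[of n ks "Suc t"] pol_d_def cap_Suc field_simps)
qed simp

lemma abs_stopped_avg_cap_incr_le:
  assumes t: "Suc t < n" and ks: "ks \<in> type_seqs K n" and j: "j < m"
  shows "\<bar>stopped_avg_cap n ks (Suc t) j - stopped_avg_cap n ks t j\<bar> \<le> alloc_bound j / real (n - Suc t)"
proof (cases "stayed n ks (Suc t)")
  case True
  have "in_dbox (avg_cap n ks t)" "ks t < K"
    using True stayed_Suc ks t by auto
  then have "\<bar>avg_cap n ks t j - sol (avg_cap n ks t) (ks t) j\<bar> \<le> alloc_bound j"
    using abs_diff_sol_le_alloc_bound j by blast
  then show ?thesis
    unfolding stopped_avg_cap_incr[OF t] using True by (simp add: abs_div divide_right_mono)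
next
  case False
  then show ?thesis
    unfolding stopped_avg_cap_incr[OF t] using alloc_bound_pos[OF j] by simp
qed

lemma abs_stopped_avg_cap_diff_le:
  assumes ks: "ks \<in> type_seqs K n" and j: "j < m"
  shows "t < n \<Longrightarrow> \<bar>stopped_avg_cap n ks t j - d j\<bar> \<le> Delta j + alloc_bound j"
proof (induction t)
  case 0
  then show ?case
    using Delta alloc_bound_pos j by (simp add: less_imp_le)
next
  case (Suc t)
  show ?case
  proof (cases "stayed n ks (Suc t)")
    case True
    then have "\<bar>stopped_avg_cap n ks t j - d j\<bar> \<le> Delta j"
      using stopped_avg_cap_eq[of n ks t] stayed_Suc in_dboxD[OF _ j] Suc.prems by fastforce
    moreover have "\<bar>stopped_avg_cap n ks (Suc t) j - stopped_avg_cap n ks t j\<bar> \<le> alloc_bound j"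
    proof -
      have "alloc_bound j / real (n - Suc t) \<le> alloc_bound j"
        using alloc_bound_pos[OF j] Suc.prems by (simp add: divide_le_eq)
      then show ?thesis
        using abs_stopped_avg_cap_incr_le[OF Suc.prems ks j] by (rule order_trans[rotated])
    qed
    ultimately show ?thesis
      by linarith
  next
    case False
    then show ?thesis
      using Suc by simp
  qed
qed

lemma stopped_avg_cap_incr_mean_zero:
  assumes t: "Suc t < n" and j: "j < m"
  shows "(\<Sum>k<K. q k * (stopped_avg_cap n (ks(t := k)) (Suc t) j - stopped_avg_cap n (ks(t := k)) t j)) = 0"
proof (cases "stayed n ks (Suc t)")
  case True
  have upd: "stayed n (ks(t := k)) (Suc t) = stayed n ks (Suc t)" "avg_cap n (ks(t := k)) t = avg_cap n ks t" for k
    unfolding stayed_Suc unfolding stayed_def avg_cap_def cap_def pol_state_upd by simp_all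
  let ?a = "avg_cap n ks t"
  have box: "in_dbox ?a"
    using True stayed_Suc by simp
  have "(\<Sum>k<K. q k * ((?a j - sol ?a k j) / real (n - Suc t))) =
      ((\<Sum>k<K. q k) * ?a j - (\<Sum>k<K. q k * sol ?a k j)) / real (n - Suc t)"
    by (simp add: sum_divide_distrib[symmetric] right_diff_distrib sum_subtractf sum_distrib_right[symmetric])
  also have "\<dots> = 0"
    using sol_load_eq[OF box j] q_sum by simp
  finally show ?thesis
    unfolding stopped_avg_cap_incr[OF t] upd using True by simp
next
  case False
  have "stayed n (ks(t := k)) (Suc t) = stayed n ks (Suc t)" for k
    unfolding stayed_Suc unfolding stayed_def avg_cap_def cap_def pol_state_upd by simp
  then show ?thesis
    unfolding stopped_avg_cap_incr[OF t] using False by simp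
qed

definition fourth_moment_const :: "nat \<Rightarrow> real" where
  "fourth_moment_const j =
    2 * (12 * alloc_bound j^4 + 4 * (Delta j + alloc_bound j) * alloc_bound j^3 + alloc_bound j^4)"

lemma stopped_avg_cap_moments:
  assumes t: "t < n" and j: "j < m"
  shows "expect_seq K q n (\<lambda>ks. stopped_avg_cap n ks t j - d j) = 0"
    and "expect_seq K q n (\<lambda>ks. (stopped_avg_cap n ks t j - d j)^2) \<le> 2 * alloc_bound j^2 / real (n - t)"
    and "expect_seq K q n (\<lambda>ks. (stopped_avg_cap n ks t j - d j)^4) \<le> fourth_moment_const j / (real (n - t))^2"
proof -
  have "expect_seq K q n (\<lambda>ks. stopped_avg_cap n ks t j - d j) = 0 \<and>
    expect_seq K q n (\<lambda>ks. (stopped_avg_cap n ks t j - d j)^2) \<le> 2 * alloc_bound j^2 / real (n - t) \<and>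
    expect_seq K q n (\<lambda>ks. (stopped_avg_cap n ks t j - d j)^4) \<le> fourth_moment_const j / (real (n - t))^2"
    unfolding fourth_moment_const_def
  proof (rule martingale_moment_bounds[where y = "\<lambda>t ks. stopped_avg_cap n ks t j - d j", OF q_nonneg q_sum _ _ _ _ _ _ _ t])
    show "0 \<le> Delta j + alloc_bound j" "0 \<le> alloc_bound j"
      using Delta alloc_bound_pos j by (auto simp: less_imp_le)
    show "\<And>ks. stopped_avg_cap n ks 0 j - d j = 0"
      by simp
    show "\<And>t ks k. stopped_avg_cap n (ks(t := k)) t j - d j = stopped_avg_cap n ks t j - d j"
      by (simp only: stopped_avg_cap_upd)
    show "\<And>t ks. t < n \<Longrightarrow> ks \<in> type_seqs K n \<Longrightarrow> \<bar>stopped_avg_cap n ks t j - d j\<bar> \<le> Delta j + alloc_bound j"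
      using abs_stopped_avg_cap_diff_le j by blast
    show "\<And>t ks. Suc t < n \<Longrightarrow> ks \<in> type_seqs K n \<Longrightarrow>
        \<bar>stopped_avg_cap n ks (Suc t) j - d j - (stopped_avg_cap n ks t j - d j)\<bar> \<le> alloc_bound j / real (n - Suc t)"
      using abs_stopped_avg_cap_incr_le j by simp
    show "\<And>t ks. Suc t < n \<Longrightarrow>
        (\<Sum>k<K. q k * (stopped_avg_cap n (ks(t := k)) (Suc t) j - d j - (stopped_avg_cap n (ks(t := k)) t j - d j))) = 0"
      using stopped_avg_cap_incr_mean_zero j by simp
  qed
  then show "expect_seq K q n (\<lambda>ks. stopped_avg_cap n ks t j - d j) = 0"
    and "expect_seq K q n (\<lambda>ks. (stopped_avg_cap n ks t j - d j)^2) \<le> 2 * alloc_bound j^2 / real (n - t)"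
    and "expect_seq K q n (\<lambda>ks. (stopped_avg_cap n ks t j - d j)^4) \<le> fourth_moment_const j / (real (n - t))^2"
    by auto
qed

definition exited :: "nat \<Rightarrow> (nat \<Rightarrow> nat) \<Rightarrow> nat \<Rightarrow> real" where
  "exited n ks t = (if stayed n ks (Suc t) then 0 else 1)"

lemma exited_le:
  assumes "0 < n" and p: "even p"
  shows "exited n ks t \<le> (\<Sum>j<m. (stopped_avg_cap n ks t j - d j)^p / Delta j^p)"
proof (cases "stayed n ks (Suc t)")
  case True
  then show ?thesis
    unfolding exited_def using p by (auto intro!: sum_nonneg divide_nonneg_nonneg simp: zero_le_even_power)
next
  case False
  then obtain j where j: "j < m" and out: "\<not> (d j - Delta j \<le> stopped_avg_cap n ks t j \<and> stopped_avg_cap n ks t j \<le> d j + Delta j)"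
    using stopped_avg_cap_exit[OF assms(1)] unfolding in_box_def by blast
  have "1 < \<bar>(stopped_avg_cap n ks t j - d j) / Delta j\<bar>"
    using out Delta j by (auto simp: abs_div less_divide_eq)
  then have "1 \<le> \<bar>(stopped_avg_cap n ks t j - d j) / Delta j\<bar>^p"
    by (simp add: one_le_power less_imp_le)
  also have "\<dots> = (stopped_avg_cap n ks t j - d j)^p / Delta j^p"
    using p by (simp add: power_even_abs power_divide)
  also have "\<dots> \<le> (\<Sum>j<m. (stopped_avg_cap n ks t j - d j)^p / Delta j^p)"
    using j p by (intro member_le_sum) (auto intro!: divide_nonneg_nonneg simp: zero_le_even_power)
  finally show ?thesis
    unfolding exited_def using False by simp
qed

section \<open>Constraint violation\<close>

lemma exited_nonneg: "0 \<le> exited n ks t"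
  unfolding exited_def by simp

lemma cap_eq: "cap n ks t j = real n * d j - (\<Sum>s<t. pol_alloc m d Delta sol n ks s j)"
  by (induction t) (simp_all add: cap_0 cap_Suc pol_alloc_def)

lemma overdraft_le:
  assumes ks: "ks \<in> type_seqs K n" and j: "j < m"
  shows "t \<le> n \<Longrightarrow> - cap n ks t j \<le> alloc_bound j * (1 + (\<Sum>s<t. exited n ks s))"
proof (induction t)
  case 0
  have "0 \<le> real n * d j"
    using d_pos j by (simp add: less_imp_le)
  then show ?case
    using alloc_bound_pos[OF j] by (simp add: cap_0)
next
  case (Suc t)
  have t: "t < n"
    using Suc.prems by simp
  have alloc: "sol (used n ks t) (ks t) j \<le> alloc_bound j"
    using ks t by (intro sol_le_alloc_bound[OF in_dbox_used _ j]) auto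
  have exits: "0 \<le> (\<Sum>s<t. exited n ks s)"
    by (intro sum_nonneg exited_nonneg)
  show ?case
  proof (cases "stayed n ks (Suc t)")
    case True
    then have "0 < avg_cap n ks t j"
      using in_dbox_pos[OF _ j] stayed_Suc by simp
    then have "0 \<le> cap n ks t j"
      unfolding cap_eq_avg_cap[OF t] by simp
    then have "- cap n ks (Suc t) j \<le> alloc_bound j"
      unfolding cap_Suc using alloc by linarith
    also have "\<dots> \<le> alloc_bound j * (1 + (\<Sum>s<Suc t. exited n ks s))"
      using alloc_bound_pos[OF j] exits True by (simp add: exited_def)
    finally show ?thesis .
  next
    case False
    then show ?thesis
      using Suc t alloc by (simp add: cap_Suc exited_def algebra_simps)
  qed
qed

lemma violation_le:
  assumes ks: "ks \<in> type_seqs K n"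
  shows "violation m d Delta sol n ks \<le> (\<Sum>j<m. alloc_bound j) * (1 + (\<Sum>t<n. exited n ks t))"
proof -
  let ?f = "\<lambda>j. max 0 ((\<Sum>t<n. pol_alloc m d Delta sol n ks t j) - real n * d j)"
  have "violation m d Delta sol n ks = L2_set ?f {..<m}"
    unfolding violation_def L2_set_def ..
  also have "\<dots> \<le> sum ?f {..<m}"
    by (rule L2_set_le_sum) simp
  also have "\<dots> \<le> (\<Sum>j<m. alloc_bound j * (1 + (\<Sum>t<n. exited n ks t)))"
  proof (intro sum_mono)
    fix j
    assume j: "j \<in> {..<m}"
    have "(\<Sum>t<n. pol_alloc m d Delta sol n ks t j) - real n * d j = - cap n ks n j"
      by (simp add: cap_eq)
    then show "?f j \<le> alloc_bound j * (1 + (\<Sum>t<n. exited n ks t))"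
      using overdraft_le[OF ks, of j n] alloc_bound_pos[of j] j sum_nonneg[of "{..<n}" "exited n ks", OF exited_nonneg]
      by simp
  qed
  finally show ?thesis
    by (simp add: sum_distrib_right)
qed

lemma expect_exited_le:
  assumes t: "t < n"
  shows "expect_seq K q n (\<lambda>ks. exited n ks t) \<le> (\<Sum>j<m. fourth_moment_const j / Delta j^4) / (real (n - t))^2"
proof -
  have "expect_seq K q n (\<lambda>ks. exited n ks t) \<le>
      expect_seq K q n (\<lambda>ks. \<Sum>j<m. (stopped_avg_cap n ks t j - d j)^4 / Delta j^4)"
    using t by (intro expect_seq_mono[OF q_nonneg] exited_le) auto
  also have "\<dots> = (\<Sum>j<m. expect_seq K q n (\<lambda>ks. (stopped_avg_cap n ks t j - d j)^4) / Delta j^4)"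
    by (simp add: expect_seq_sum expect_seq_mult_left divide_inverse mult.commute)
  also have "\<dots> \<le> (\<Sum>j<m. fourth_moment_const j / (real (n - t))^2 / Delta j^4)"
    using stopped_avg_cap_moments(3)[OF t] Delta by (intro sum_mono divide_right_mono) auto
  finally show ?thesis
    by (simp add: sum_divide_distrib divide_divide_eq_left mult.commute)
qed

definition violation_const :: real where
  "violation_const = (\<Sum>j<m. alloc_bound j) * (1 + 2 * (\<Sum>j<m. fourth_moment_const j / Delta j^4))"

lemma exp_violation_le: "0 < n \<Longrightarrow> exp_violation m K q d Delta sol n \<le> violation_const"
proof -
  define C where "C = (\<Sum>j<m. fourth_moment_const j / Delta j^4)"
  have C: "0 \<le> C"
    unfolding C_def fourth_moment_const_def using alloc_bound_pos Delta
    by (intro sum_nonneg divide_nonneg_nonneg) (auto intro!: add_nonneg_nonneg mult_nonneg_nonneg simp: less_imp_le)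
  have B: "0 \<le> (\<Sum>j<m. alloc_bound j)"
    using alloc_bound_pos by (intro sum_nonneg) (simp add: less_imp_le)
  have "exp_violation m K q d Delta sol n \<le>
      expect_seq K q n (\<lambda>ks. (\<Sum>j<m. alloc_bound j) * (1 + (\<Sum>t<n. exited n ks t)))"
    unfolding exp_violation_def by (intro expect_seq_mono[OF q_nonneg] violation_le)
  also have "\<dots> = (\<Sum>j<m. alloc_bound j) * (1 + (\<Sum>t<n. expect_seq K q n (\<lambda>ks. exited n ks t)))"
    by (simp add: expect_seq_mult_left expect_seq_add expect_seq_sum expect_seq_const[OF q_sum])
  also have "\<dots> \<le> (\<Sum>j<m. alloc_bound j) * (1 + C * (\<Sum>t<n. 1 / (real (n - t))^2))"
    using expect_exited_le B unfolding C_def sum_distrib_left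
    by (intro mult_left_mono add_left_mono sum_mono) auto
  also have "\<dots> \<le> (\<Sum>j<m. alloc_bound j) * (1 + C * 2)"
    using sum_inverse_square_countdown_le C B by (intro mult_left_mono add_left_mono mult_left_mono) auto
  finally show ?thesis
    unfolding violation_const_def C_def by (simp add: mult.commute)
qed

section \<open>Regret\<close>

definition exit_loss :: real where
  "exit_loss = (\<Sum>j<m. price j * (Delta j + alloc_bound j))"

definition quad_coeff :: "nat \<Rightarrow> real" where
  "quad_coeff j = exit_loss / Delta j^2 + curv_const / d j^2"

definition regret_const :: real where
  "regret_const = (\<Sum>j<m. quad_coeff j * (2 * alloc_bound j^2))"

lemma exit_loss_nonneg: "0 \<le> exit_loss"
  unfolding exit_loss_def using price_nonneg Delta alloc_bound_pos
  by (intro sum_nonneg mult_nonneg_nonneg) (auto simp: less_imp_le)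

lemma quad_coeff_nonneg: "0 \<le> quad_coeff j"
  unfolding quad_coeff_def using exit_loss_nonneg curv_const_nonneg by simp

lemma regret_const_nonneg: "0 \<le> regret_const"
  unfolding regret_const_def using quad_coeff_nonneg by (intro sum_nonneg mult_nonneg_nonneg) auto

text \<open>Before the exit the policy uses the stopped process itself; after it the loss of the linear
  term is at most exit_loss, and the exit indicator is dominated by a quadratic in the deviation.\<close>

lemma ce_value_used_ge:
  assumes n: "0 < n" and t: "t < n" and ks: "ks \<in> type_seqs K n"
  shows "ce_value d + (\<Sum>j<m. price j * (stopped_avg_cap n ks t j - d j)
      - quad_coeff j * (stopped_avg_cap n ks t j - d j)^2) \<le> ce_value (used n ks t)"
proof -
  let ?y = "\<lambda>j. stopped_avg_cap n ks t j - d j"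
  let ?x = "\<lambda>j. used n ks t j - d j"
  have x_eq: "?x j = (if stayed n ks (Suc t) then ?y j else 0)" for j
    using used_eq stopped_avg_cap_eq[OF n] stayed_Suc by auto
  have lin: "(\<Sum>j<m. price j * ?y j) - exit_loss * exited n ks t \<le> (\<Sum>j<m. price j * ?x j)"
  proof (cases "stayed n ks (Suc t)")
    case False
    have "(\<Sum>j<m. price j * ?y j) \<le> exit_loss"
      unfolding exit_loss_def using abs_stopped_avg_cap_diff_le[OF ks _ t] price_nonneg
      by (intro sum_mono mult_left_mono) (auto simp: abs_le_iff)
    then show ?thesis
      using False x_eq by (simp add: exited_def)
  qed (simp add: x_eq exited_def)
  have "ce_value d + (\<Sum>j<m. price j * ?x j) - curv_const * (\<Sum>j<m. (?x j / d j)^2) \<le> ce_value (used n ks t)"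
    using ce_value_lower_bound[OF in_dbox_used] by simp
  moreover have "curv_const * (\<Sum>j<m. (?x j / d j)^2) \<le> curv_const * (\<Sum>j<m. ?y j^2 / d j^2)"
    using x_eq curv_const_nonneg by (intro mult_left_mono sum_mono) (simp_all add: power_divide)
  moreover have "exit_loss * exited n ks t \<le> exit_loss * (\<Sum>j<m. ?y j^2 / Delta j^2)"
    using exited_le[OF n, of 2] exit_loss_nonneg by (intro mult_left_mono) auto
  moreover have "(\<Sum>j<m. price j * ?y j - quad_coeff j * ?y j^2) =
      (\<Sum>j<m. price j * ?y j) - exit_loss * (\<Sum>j<m. ?y j^2 / Delta j^2) - curv_const * (\<Sum>j<m. ?y j^2 / d j^2)"
    unfolding quad_coeff_def by (simp add: sum_subtractf sum_distrib_left algebra_simps sum.distrib)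
  ultimately show ?thesis
    using lin by linarith
qed

lemma expect_ce_value_used_ge:
  assumes n: "0 < n" and t: "t < n"
  shows "ce_value d - regret_const / real (n - t) \<le> expect_seq K q n (\<lambda>ks. ce_value (used n ks t))"
proof -
  let ?y = "\<lambda>j ks. stopped_avg_cap n ks t j - d j"
  have "- (quad_coeff j * (2 * alloc_bound j^2 / real (n - t))) \<le>
      price j * expect_seq K q n (?y j) - quad_coeff j * expect_seq K q n (\<lambda>ks. (?y j ks)^2)" if "j < m" for j
  proof -
    have "quad_coeff j * expect_seq K q n (\<lambda>ks. (?y j ks)^2) \<le> quad_coeff j * (2 * alloc_bound j^2 / real (n - t))"
      using stopped_avg_cap_moments(2)[OF t that] quad_coeff_nonneg[of j] by (intro mult_left_mono)
    then show ?thesis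
      using stopped_avg_cap_moments(1)[OF t that] by simp
  qed
  then have "(\<Sum>j<m. - (quad_coeff j * (2 * alloc_bound j^2 / real (n - t)))) \<le>
      (\<Sum>j<m. price j * expect_seq K q n (?y j) - quad_coeff j * expect_seq K q n (\<lambda>ks. (?y j ks)^2))"
    by (intro sum_mono) auto
  moreover have "(\<Sum>j<m. - (quad_coeff j * (2 * alloc_bound j^2 / real (n - t)))) = - (regret_const / real (n - t))"
    unfolding regret_const_def by (simp add: sum_negf sum_divide_distrib)
  ultimately have "ce_value d + - (regret_const / real (n - t)) \<le>
      ce_value d + (\<Sum>j<m. price j * expect_seq K q n (?y j) - quad_coeff j * expect_seq K q n (\<lambda>ks. (?y j ks)^2))"
    by (intro add_left_mono) simp
  then have "ce_value d - regret_const / real (n - t) \<le>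
      ce_value d + (\<Sum>j<m. price j * expect_seq K q n (?y j) - quad_coeff j * expect_seq K q n (\<lambda>ks. (?y j ks)^2))"
    by (simp only: diff_conv_add_uminus)
  also have "\<dots> = expect_seq K q n (\<lambda>ks. ce_value d + (\<Sum>j<m. price j * ?y j ks - quad_coeff j * (?y j ks)^2))"
    by (simp add: expect_seq_add expect_seq_sum expect_seq_diff expect_seq_mult_left expect_seq_const[OF q_sum])
  also have "\<dots> \<le> expect_seq K q n (\<lambda>ks. ce_value (used n ks t))"
    by (intro expect_seq_mono[OF q_nonneg] ce_value_used_ge[OF n t])
  finally show ?thesis .
qed

lemma expect_online_util: "expect_seq K q n (online_util m w u d Delta sol n) =
    (\<Sum>t<n. expect_seq K q n (\<lambda>ks. ce_value (used n ks t)))"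
proof -
  have "expect_seq K q n (\<lambda>ks. w (ks t) * ln (\<Sum>j<m. u (ks t) j * pol_alloc m d Delta sol n ks t j)) =
      expect_seq K q n (\<lambda>ks. ce_value (used n ks t))" if t: "t < n" for t
  proof -
    have "used n (ks(t := k)) t = used n ks t" for ks k
      unfolding pol_used_d_def pol_state_upd ..
    then show ?thesis
      unfolding pol_alloc_def ce_value_def CE_obj_def
      by (subst expect_seq_resample_coord[OF t q_sum]) (simp add: mult.assoc)
  qed
  then show ?thesis
    unfolding online_util_def expect_seq_sum by simp
qed

lemma expect_offline_bound: "expect_seq K q n (offline_bound n) = real n * ce_value d"
proof -
  have "expect_seq K q n (offline_bound n) =
      (\<Sum>t<n. expect_seq K q n (\<lambda>ks. w (ks t) * ln (sol_util d (ks t)) - w (ks t))) + real n * (\<Sum>k<K. q k * w k)"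
    unfolding offline_bound_def by (simp add: expect_seq_add expect_seq_sum expect_seq_const[OF q_sum])
  also have "(\<Sum>t<n. expect_seq K q n (\<lambda>ks. w (ks t) * ln (sol_util d (ks t)) - w (ks t))) =
      (\<Sum>t<n. (\<Sum>k<K. q k * (w k * ln (sol_util d k) - w k)))"
    by (intro sum.cong refl) (rule expect_seq_coord[OF _ q_sum], simp)
  finally show ?thesis
    unfolding ce_value_def CE_obj_def sol_util_def[symmetric]
    by (simp add: right_diff_distrib sum_subtractf mult_ac)
qed

lemma regret_le: "0 < n \<Longrightarrow> regret m K q w u d Delta sol n \<le> regret_const * (1 + ln (real n))"
proof -
  assume n: "0 < n"
  have "regret m K q w u d Delta sol n \<le> expect_seq K q n (\<lambda>ks. offline_bound n ks - online_util m w u d Delta sol n ks)"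
    unfolding regret_def by (intro expect_seq_mono[OF q_nonneg]) (simp add: offline_opt_le)
  also have "\<dots> = real n * ce_value d - (\<Sum>t<n. expect_seq K q n (\<lambda>ks. ce_value (used n ks t)))"
    by (simp add: expect_seq_diff expect_offline_bound expect_online_util)
  also have "\<dots> \<le> real n * ce_value d - (\<Sum>t<n. ce_value d - regret_const / real (n - t))"
    using expect_ce_value_used_ge[OF n] by (intro diff_left_mono sum_mono) auto
  also have "\<dots> = regret_const * (\<Sum>t<n. 1 / real (n - t))"
    by (simp add: sum_subtractf sum_distrib_left)
  also have "\<dots> \<le> regret_const * (1 + ln (real n))"
    using sum_inverse_countdown_le[OF n] regret_const_nonneg by (rule mult_left_mono)
  finally show ?thesis .
qed

end

theorem theorem2:
  fixes m K :: nat
    and q w :: "nat \<Rightarrow> real"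
    and u :: "nat \<Rightarrow> nat \<Rightarrow> real"
    and d Delta :: "nat \<Rightarrow> real"
    and plo pup :: real
    and sol :: "(nat \<Rightarrow> real) \<Rightarrow> nat \<Rightarrow> nat \<Rightarrow> real"
  assumes q_pos: "\<forall>k<K. 0 < q k"
    and q_sum: "(\<Sum>k<K. q k) = 1"
    and w_pos: "\<forall>k<K. 0 < w k"
    and u_nonneg: "\<forall>k<K. \<forall>j<m. 0 \<le> u k j"
    and u_good: "\<forall>j<m. \<exists>k<K. 0 < u k j"
    and d_pos: "\<forall>j<m. 0 < d j"
    and Delta: "\<forall>j<m. 0 < Delta j \<and> Delta j < d j"
    and p_bounds_pos: "0 < plo" "plo \<le> pup"
    and sol_opt: "\<forall>d'. in_box m d Delta d' \<longrightarrow> CE_optimal m K q w u d' (sol d')"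
    and prices_bounded: "\<forall>n ks t p. ks \<in> PiE {..<n} (\<lambda>_. {..<K}) \<and> t < n \<and>
          CE_dual_optimal m K q w u (pol_used_d m d Delta sol n ks t) p
          \<longrightarrow> (\<forall>j<m. plo \<le> p j \<and> p j \<le> pup)"
  shows "(\<exists>C. \<forall>\<^sub>F n in sequentially. exp_violation m K q d Delta sol n \<le> C) \<and>
         (\<exists>C. \<forall>\<^sub>F n in sequentially. regret m K q w u d Delta sol n \<le> C * ln (real n))"
proof -
  interpret fisher_market m K q w u d Delta sol
    using q_pos q_sum w_pos u_nonneg u_good d_pos Delta sol_opt by unfold_locales
  have "\<forall>\<^sub>F n in sequentially. exp_violation m K q d Delta sol n \<le> violation_const"
    using exp_violation_le by (intro eventually_sequentiallyI[of 1]) simp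
  moreover have "\<forall>\<^sub>F n in sequentially. regret m K q w u d Delta sol n \<le> (2 * regret_const) * ln (real n)"
  proof (intro eventually_sequentiallyI[of 3])
    fix n :: nat
    assume n: "3 \<le> n"
    then have "1 \<le> ln (real n)"
      using exp_le by (subst ln_ge_iff) auto
    then have "regret_const * (1 + ln (real n)) \<le> (2 * regret_const) * ln (real n)"
      using regret_const_nonneg mult_left_mono[of 1 "ln (real n)" regret_const] by (simp add: algebra_simps)
    then show "regret m K q w u d Delta sol n \<le> (2 * regret_const) * ln (real n)"
      using regret_le[of n] n by simp
  qed
  ultimately show ?thesis
    by blast
qed

end
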